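(* Suppose (A1)–(A5) hold. Let $u\in\mathcal{U}^+(\mathbb{T}^d\times I)$ be a viscosity subsolution and $v\in\mathcal{U}^-(\mathbb{T}^d\times I)$ a viscosity supersolution of $$F(x,Dw(x,\xi),\xi)+\int_I k(\xi,\eta)\big(w(x,\xi)-w(x,\eta)\big)\,d\eta=f(x,\xi)\quad\text{in }\mathbb{T}^d\times I,$$ and assume $u$ and $-v$ are bounded above on $\mathbb{T}^d\times I$. If $u\le v$ on $\mathcal{Z}$, then $u\le v$ on $\mathbb{T}^d\times I$.
   Context: $I\subset\mathbb{R}$ finite interval with $|I|=1$; $k:I\times I\to\mathbb{R}$ Borel measurable with $0<k_0\le k\le k_1$. $F\in C(\mathbb{T}^d\times\mathbb{R}^d)\otimes\mathcal{B}(I)$ with $F(\cdot,p,\cdot)$ bounded for each $p$; $f\in C(\mathbb{T}^d)\otimes\mathcal{B}(I)$ bounded. $\tilde{\mathcal{A}}:=\{x\in\mathbb{T}^d: f(x,\xi)=0\text{ for a.e. }\xi\in I\}$, $\mathcal{Z}:=\{(x,\xi)\in\tilde{\mathcal{A}}\times I: f(x,\xi)=0\}$. $\mathcal{U}^+(\mathbb{T}^d\times I)$: functions $u$ with $u(x,\cdot)$ Borel measurable and integrable on $I$ for each $x$ and $u(\cdot,\xi)$ upper semicontinuous for each $\xi$; $\mathcal{U}^-:=-\mathcal{U}^+$. Subsolution: whenever $\phi\in C^1(\mathbb{T}^d)$, $\xi\in I$, $u(\cdot,\xi)-\phi$ has a local maximum at $\hat x$, then $F(\hat x,D\phi(\hat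 x),\xi)+\int_I k(\xi,\eta)(u(\hat x,\xi)-u(\hat x,\eta))d\eta\le f(\hat x,\xi)$; supersolution: reverse inequality at local minima. Assumptions: (A1) $C_1|p|^m-C_2\le F(x,p,\xi)$ for constants $C_1,C_2>0$, $m>1$. (A2) $f\ge0$ and $\mathcal{A}:=\{x: f(x,\xi)=0\ \forall\xi\}\neq\emptyset$. (A3) $p\mapsto F(x,p,\xi)$ convex. (A4) $F\ge0$, $F(x,0,\xi)=0$. (A5) modulus $\omega$ with $|f(x,\xi)-f(y,\xi)|\le\omega(|x-y|)$; for each $R>0$ modulus $\omega_R$ with $|F(x,p,\xi)-F(y,q,\xi)|\le\omega_R(|x-y|+|p-q|)$ for $p,q\in B(0,R)$, uniformly in $\xi$. *)

theory Defs
  imports "HOL-Analysis.Analysis"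
begin

text \<open>Functions on the torus T^d are represented as Z^d-periodic functions on real^'n.\<close>
definition periodic_fn :: "(real^'n \<Rightarrow> 'b) \<Rightarrow> bool" where
  "periodic_fn g \<longleftrightarrow> (\<forall>x i. g (x + axis i 1) = g x)"

definition usc :: "('a::topological_space \<Rightarrow> real) \<Rightarrow> bool" where
  "usc g \<longleftrightarrow> (\<forall>t. open {y. g y < t})"

definition modulus :: "(real \<Rightarrow> real) \<Rightarrow> bool" where
  "modulus \<omega> \<longleftrightarrow> \<omega> 0 = 0 \<and> mono_on {0..} \<omega> \<and> (\<omega> \<longlongrightarrow> 0) (at_right 0)"

definition C1_test :: "(real^'n \<Rightarrow> real) \<Rightarrow> (real^'n \<Rightarrow> real^'n) \<Rightarrow> bool" where
  "C1_test \<phi> D\<phi> \<longleftrightarrow> periodic_fn \<phi> \<and> continuous_on UNIV D\<phi> \<and>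
     (\<forall>x. (\<phi> has_derivative (\<lambda>h. D\<phi> x \<bullet> h)) (at x))"

definition U_plus :: "real set \<Rightarrow> (real^'n \<Rightarrow> real \<Rightarrow> real) \<Rightarrow> bool" where
  "U_plus I u \<longleftrightarrow> periodic_fn u \<and>
     (\<forall>x. u x \<in> borel_measurable (restrict_space borel I) \<and> set_integrable lborel I (u x)) \<and>
     (\<forall>\<xi>\<in>I. usc (\<lambda>x. u x \<xi>))"

definition U_minus :: "real set \<Rightarrow> (real^'n \<Rightarrow> real \<Rightarrow> real) \<Rightarrow> bool" where
  "U_minus I v \<longleftrightarrow> U_plus I (\<lambda>x \<xi>. - v x \<xi>)"

definition nonlocal_term :: "real set \<Rightarrow> (real \<Rightarrow> real \<Rightarrow> real) \<Rightarrow> (real^'n \<Rightarrow> real \<Rightarrow> real)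
    \<Rightarrow> real^'n \<Rightarrow> real \<Rightarrow> real" where
  "nonlocal_term I k w x \<xi> = (LINT \<eta>:I|lborel. k \<xi> \<eta> * (w x \<xi> - w x \<eta>))"

definition viscosity_subsolution ::
  "real set \<Rightarrow> (real^'n \<Rightarrow> real^'n \<Rightarrow> real \<Rightarrow> real) \<Rightarrow> (real \<Rightarrow> real \<Rightarrow> real)
    \<Rightarrow> (real^'n \<Rightarrow> real \<Rightarrow> real) \<Rightarrow> (real^'n \<Rightarrow> real \<Rightarrow> real) \<Rightarrow> bool" where
  "viscosity_subsolution I F k f u \<longleftrightarrow>
     (\<forall>\<phi> D\<phi> \<xi> xh. C1_test \<phi> D\<phi> \<longrightarrow> \<xi> \<in> I \<longrightarrow>
        (\<exists>e>0. \<forall>y. dist y xh < e \<longrightarrow> u y \<xi> - \<phi> y \<le> u xh \<xi> - \<phi> xh) \<longrightarrow>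
        F xh (D\<phi> xh) \<xi> + nonlocal_term I k u xh \<xi> \<le> f xh \<xi>)"

definition viscosity_supersolution ::
  "real set \<Rightarrow> (real^'n \<Rightarrow> real^'n \<Rightarrow> real \<Rightarrow> real) \<Rightarrow> (real \<Rightarrow> real \<Rightarrow> real)
    \<Rightarrow> (real^'n \<Rightarrow> real \<Rightarrow> real) \<Rightarrow> (real^'n \<Rightarrow> real \<Rightarrow> real) \<Rightarrow> bool" where
  "viscosity_supersolution I F k f v \<longleftrightarrow>
     (\<forall>\<phi> D\<phi> \<xi> xh. C1_test \<phi> D\<phi> \<longrightarrow> \<xi> \<in> I \<longrightarrow>
        (\<exists>e>0. \<forall>y. dist y xh < e \<longrightarrow> v y \<xi> - \<phi> y \<ge> v xh \<xi> - \<phi> xh) \<longrightarrow>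
        F xh (D\<phi> xh) \<xi> + nonlocal_term I k v xh \<xi> \<ge> f xh \<xi>)"

definition A_tilde :: "real set \<Rightarrow> (real^'n \<Rightarrow> real \<Rightarrow> real) \<Rightarrow> (real^'n) set" where
  "A_tilde I f = {x. AE \<xi> in lborel. \<xi> \<in> I \<longrightarrow> f x \<xi> = 0}"

definition Zset :: "real set \<Rightarrow> (real^'n \<Rightarrow> real \<Rightarrow> real) \<Rightarrow> ((real^'n) \<times> real) set" where
  "Zset I f = {(x, \<xi>). x \<in> A_tilde I f \<and> \<xi> \<in> I \<and> f x \<xi> = 0}"

end

theory Submission imports Defs begin

(*
  For 0 < theta < 1 put w = theta u - v.  Convexity of F in p together with F(x,0,xi) = 0 makes
  theta u a subsolution with right-hand side theta f, so it is a strict subsolution wherever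
  f > 0.  Fix eta and a maximum point x0 of w(-,eta).  Doubling the variables with the periodic
  penalty N Q(x - y) + Q(x - x0), where Q is smooth and vanishes exactly on Z^d, and letting
  N go to infinity (uniform continuity of F, upper semicontinuity of u and -v, reverse Fatou
  for the nonlocal terms) gives
     int_I k(eta,zeta) (w(x0,eta) - w(x0,zeta)) dzeta <= -(1 - theta) f(x0,eta).
  Along a maximizing sequence for M = sup w this inequality, compactness of the torus and Fatou
  show that w(x*,-) = M almost everywhere on I for some x*.  Applied at x* the inequality then
  forces f(x*,-) = 0 almost everywhere, i.e. x* lies in the set A~, so M is attained at a point
  of Z, where u <= v gives M <= (1 - theta) sup(-v).  Letting theta tend to 1 yields u <= v.
*)

section \<open>Integer lattice and periodic functions\<close>

definition int_lattice :: "(real^'n) set" where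
  "int_lattice = {z. \<forall>i. z$i \<in> \<int>}"

lemma int_lattice_0 [simp]: "0 \<in> int_lattice"
  and int_lattice_axis [simp]: "axis i 1 \<in> int_lattice"
  and int_lattice_uminus [simp]: "- z \<in> int_lattice \<longleftrightarrow> z \<in> int_lattice"
  and int_lattice_diff [intro]: "z \<in> int_lattice \<Longrightarrow> y \<in> int_lattice \<Longrightarrow> z - y \<in> int_lattice"
  by (auto simp: int_lattice_def axis_def)

lemma periodic_fn_add_int_multiple:
  assumes "periodic_fn g" shows "g (x + of_int c *\<^sub>R axis i 1) = g x"
proof -
  have nat: "g (y + of_nat n *\<^sub>R axis i 1) = g y" for y n
  proof (induction n arbitrary: y)
    case (Suc n)
    have "g (y + of_nat (Suc n) *\<^sub>R axis i 1) = g ((y + of_nat n *\<^sub>R axis i 1) + axis i 1)"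
      by (simp add: algebra_simps)
    with Suc assms show ?case by (simp add: periodic_fn_def)
  qed simp
  show ?thesis
  proof (cases "c \<ge> 0")
    case True
    then show ?thesis using nat[of x "nat c"] by simp
  next
    case False
    then show ?thesis using nat[of "x + of_int c *\<^sub>R axis i 1" "nat (- c)"] by simp
  qed
qed

lemma periodic_fn_add_int_lattice:
  assumes "periodic_fn g" "z \<in> int_lattice" shows "g (x + z) = g x"
proof -
  have "g (x + (\<Sum>i\<in>S. z$i *\<^sub>R axis i 1)) = g x" for S
  proof (induction S arbitrary: x rule: infinite_finite_induct)
    case (insert j S)
    obtain c where "z$j = of_int c" using assms(2) by (auto simp: int_lattice_def elim!: Ints_cases)
    then have "g (x + (\<Sum>i\<in>insert j S. z$i *\<^sub>R axis i 1))
        = g ((x + (\<Sum>i\<in>S. z$i *\<^sub>R axis i 1)) + of_int c *\<^sub>R axis j 1)"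
      using insert.hyps by (simp add: ac_simps)
    with insert.IH periodic_fn_add_int_multiple[OF assms(1)] show ?case by simp
  qed simp_all
  moreover have "(\<Sum>i\<in>UNIV. z$i *\<^sub>R axis i 1) = z"
    by (simp add: vec_eq_iff axis_def if_distrib cong: if_cong)
  ultimately show ?thesis by metis
qed

lemma periodic_fn_eq_mod_int_lattice:
  "periodic_fn g \<Longrightarrow> x - y \<in> int_lattice \<Longrightarrow> g x = g y"
  using periodic_fn_add_int_lattice[of g "x - y" y] by simp

lemma int_lattice_representative_in_unit_cube: "\<exists>y\<in>cbox 0 1. x - y \<in> int_lattice"
proof
  let ?y = "x - (\<chi> i. of_int \<lfloor>x$i\<rfloor>)"
  show "?y \<in> cbox 0 1" by (auto simp: mem_box_cart) linarith
  show "x - ?y \<in> int_lattice" by (simp add: int_lattice_def)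
qed

section \<open>A smooth periodic penalty\<close>

text \<open>The penalty torus_penalty plays the role of |x - y|^2 on the torus: it is smooth,
  Z^d-periodic and vanishes exactly on the lattice.\<close>

definition torus_penalty :: "real^'n \<Rightarrow> real" where
  "torus_penalty z = (\<Sum>i\<in>UNIV. 1 - cos (2 * pi * z$i))"

definition torus_penalty_grad :: "real^'n \<Rightarrow> real^'n" where
  "torus_penalty_grad z = (\<chi> i. 2 * pi * sin (2 * pi * z$i))"

lemma torus_penalty_nonneg: "torus_penalty z \<ge> 0"
  unfolding torus_penalty_def by (intro sum_nonneg) auto

lemma torus_penalty_add_int_lattice:
  assumes "c \<in> int_lattice" shows "torus_penalty (z + c) = torus_penalty z"
proof -
  have "cos (2 * pi * (z$i + c$i)) = cos (2 * pi * z$i)" for i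
  proof -
    obtain n where "c$i = of_int n" using assms by (auto simp: int_lattice_def elim!: Ints_cases)
    moreover have "2 * pi * (z$i + of_int n) = 2 * pi * z$i + 2 * pi * of_int n"
      by (simp add: algebra_simps)
    ultimately show ?thesis by (simp only: cos_add cos_int_2pin sin_int_2pin)
  qed
  then show ?thesis by (simp add: torus_penalty_def)
qed

lemma periodic_torus_penalty: "periodic_fn torus_penalty"
  by (simp add: periodic_fn_def torus_penalty_add_int_lattice)

lemma torus_penalty_eq_0_iff: "torus_penalty z = 0 \<longleftrightarrow> z \<in> int_lattice"
proof
  assume "torus_penalty z = 0"
  then have "cos (2 * pi * z$i) = 1" for i
    unfolding torus_penalty_def by (subst (asm) sum_nonneg_eq_0_iff) auto
  then have "\<exists>n::int. 2 * pi * z$i = of_int n * 2 * pi" for i using cos_one_2pi_int by blast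
  then show "z \<in> int_lattice" by (auto simp: int_lattice_def Ints_def)
next
  assume "z \<in> int_lattice"
  then show "torus_penalty z = 0"
    using torus_penalty_add_int_lattice[of z 0] by (simp add: torus_penalty_def)
qed

lemma torus_penalty_grad_int_lattice:
  assumes "c \<in> int_lattice" shows "torus_penalty_grad c = 0"
proof -
  have "\<exists>n::int. c$i = of_int n" for i using assms by (auto simp: int_lattice_def elim!: Ints_cases)
  then show ?thesis
    by (auto simp: torus_penalty_grad_def vec_eq_iff) (metis sin_int_2pin)
qed

lemma norm_torus_penalty_grad_le: "norm (torus_penalty_grad (z::real^'n)) \<le> 2 * pi * CARD('n)"
proof -
  have "norm (torus_penalty_grad z) \<le> (\<Sum>i\<in>UNIV. \<bar>torus_penalty_grad z $ i\<bar>)"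
    by (rule norm_le_l1_cart)
  also have "\<dots> \<le> (\<Sum>i\<in>(UNIV::'n set). 2 * pi)"
    by (intro sum_mono) (auto simp: torus_penalty_grad_def abs_mult)
  finally show ?thesis by (simp add: mult.commute)
qed

lemma continuous_on_torus_penalty: "continuous_on UNIV torus_penalty"
  unfolding torus_penalty_def by (intro continuous_intros)

lemma continuous_on_torus_penalty_grad: "continuous_on UNIV torus_penalty_grad"
  unfolding torus_penalty_grad_def by (intro continuous_on_vec_lambda continuous_intros)

lemma has_derivative_torus_penalty:
  "(torus_penalty has_derivative (\<lambda>h. torus_penalty_grad z \<bullet> h)) (at z)"
proof -
  have "((\<lambda>z. 1 - cos (2 * pi * z$i)) has_derivative (\<lambda>h. 2 * pi * sin (2 * pi * z$i) * h$i)) (at z)"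
    for i
    by (auto intro!: derivative_eq_intros bounded_linear_imp_has_derivative simp: algebra_simps)
  then have "(torus_penalty has_derivative (\<lambda>h. \<Sum>i\<in>UNIV. 2 * pi * sin (2 * pi * z$i) * h$i)) (at z)"
    unfolding torus_penalty_def by (intro has_derivative_sum) auto
  then show ?thesis by (simp add: torus_penalty_grad_def inner_vec_def)
qed

lemma C1_test_const: "C1_test (\<lambda>_. c) (\<lambda>_. 0)"
  by (simp add: C1_test_def periodic_fn_def)

lemma C1_test_add:
  assumes "C1_test \<phi> D\<phi>" "C1_test \<psi> D\<psi>"
  shows "C1_test (\<lambda>y. \<phi> y + \<psi> y) (\<lambda>y. D\<phi> y + D\<psi> y)"
proof -
  have "((\<lambda>y. \<phi> y + \<psi> y) has_derivative (\<lambda>h. (D\<phi> x + D\<psi> x) \<bullet> h)) (at x)" for x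
    using has_derivative_add[of \<phi> "\<lambda>h. D\<phi> x \<bullet> h" "at x" \<psi> "\<lambda>h. D\<psi> x \<bullet> h"] assms
    by (simp add: C1_test_def inner_add_left)
  with assms show ?thesis
    by (simp add: C1_test_def periodic_fn_def continuous_on_add)
qed

lemma C1_test_cmult:
  assumes "C1_test \<phi> D\<phi>"
  shows "C1_test (\<lambda>y. c * \<phi> y) (\<lambda>y. c *\<^sub>R D\<phi> y)"
proof -
  have "((\<lambda>y. c * \<phi> y) has_derivative (\<lambda>h. (c *\<^sub>R D\<phi> x) \<bullet> h)) (at x)" for x
    using has_derivative_mult_right[of \<phi> "\<lambda>h. D\<phi> x \<bullet> h" "at x" c] assms
    by (simp add: C1_test_def)
  with assms show ?thesis
    by (simp add: C1_test_def periodic_fn_def continuous_on_scaleR)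
qed

lemma C1_test_torus_penalty_shift:
  "C1_test (\<lambda>y. torus_penalty (y - c)) (\<lambda>y. torus_penalty_grad (y - c))"
  unfolding C1_test_def periodic_fn_def
proof (intro conjI allI)
  show "torus_penalty (x + axis i 1 - c) = torus_penalty (x - c)" for x i
    using torus_penalty_add_int_lattice[of "axis i 1" "x - c"] by (simp add: algebra_simps)
  show "continuous_on UNIV (\<lambda>y. torus_penalty_grad (y - c))"
    by (intro continuous_on_compose2[OF continuous_on_torus_penalty_grad] continuous_intros) auto
  fix x
  have "((\<lambda>y. y - c) has_derivative (\<lambda>h. h)) (at x)"
    by (auto intro!: derivative_eq_intros)
  from has_derivative_compose[OF this has_derivative_torus_penalty]
  show "((\<lambda>y. torus_penalty (y - c)) has_derivative (\<lambda>h. torus_penalty_grad (x - c) \<bullet> h)) (at x)"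
    by simp
qed

lemma C1_test_torus_penalty_reflect:
  "C1_test (\<lambda>y. torus_penalty (c - y)) (\<lambda>y. - torus_penalty_grad (c - y))"
  unfolding C1_test_def periodic_fn_def
proof (intro conjI allI)
  show "torus_penalty (c - (x + axis i 1)) = torus_penalty (c - x)" for x i
    using torus_penalty_add_int_lattice[of "- axis i 1" "c - x"] by (simp add: algebra_simps)
  show "continuous_on UNIV (\<lambda>y. - torus_penalty_grad (c - y))"
    by (intro continuous_intros continuous_on_compose2[OF continuous_on_torus_penalty_grad]) auto
  fix x
  have "((\<lambda>y. c - y) has_derivative (\<lambda>h. - h)) (at x)"
    by (auto intro!: derivative_eq_intros)
  from has_derivative_compose[OF this has_derivative_torus_penalty]
  show "((\<lambda>y. torus_penalty (c - y)) has_derivative (\<lambda>h. - torus_penalty_grad (c - x) \<bullet> h)) (at x)"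
    by simp
qed

section \<open>Upper semicontinuity\<close>

lemma usc_eventually_less:
  assumes "usc g" "X \<longlonglongrightarrow> x" "g x < t"
  shows "\<forall>\<^sub>F n in sequentially. g (X n) < t"
proof -
  have "open {y. g y < t}" using assms(1) by (simp add: usc_def)
  with assms(2,3) show ?thesis by (auto dest: topological_tendstoD)
qed

lemma usc_add:
  assumes "usc g" "usc h" shows "usc (\<lambda>x. g x + h x)"
  unfolding usc_def
proof
  fix t
  have "{x. g x + h x < t} = (\<Union>s. {x. g x < s} \<inter> {x. h x < t - s})"
  proof (intro equalityI subsetI)
    fix x assume "x \<in> {x. g x + h x < t}"
    then show "x \<in> (\<Union>s. {x. g x < s} \<inter> {x. h x < t - s})"
      by (intro UN_I[of "(g x + t - h x) / 2"]) (auto simp: field_simps)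
  qed auto
  with assms show "open {x. g x + h x < t}" by (auto simp: usc_def)
qed

lemma usc_cmult:
  assumes "usc g" "c > 0" shows "usc (\<lambda>x. c * g x)"
proof -
  have "{x. c * g x < t} = {x. g x < t / c}" for t
    using assms(2) by (auto simp: field_simps)
  with assms(1) show ?thesis by (simp add: usc_def)
qed

lemma usc_continuous: "continuous_on UNIV h \<Longrightarrow> usc h"
  by (simp add: usc_def open_Collect_less)

lemma usc_compose_continuous:
  assumes "usc g" "continuous_on UNIV h" shows "usc (\<lambda>x. g (h x))"
  unfolding usc_def
proof
  fix t
  have "open (h -` {y. g y < t})"
    using assms by (intro open_vimage) (auto simp: usc_def)
  then show "open {x. g (h x) < t}" by (simp add: vimage_def)
qed

lemma usc_bdd_above:
  fixes g :: "'a::topological_space \<Rightarrow> real"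
  assumes "usc g" "compact K"
  shows "bdd_above (g ` K)"
proof -
  have opn: "open {x. g x < t}" for t using assms(1) by (simp add: usc_def)
  have "K \<subseteq> (\<Union>n\<in>UNIV. {x. g x < real n})"
    using reals_Archimedean2 by blast
  then obtain N where N: "N \<subseteq> UNIV" "finite N" "K \<subseteq> (\<Union>n\<in>N. {x. g x < real n})"
    by (rule compactE_image[OF assms(2) opn])
  have "g x \<le> real (Max (insert 0 N))" if x: "x \<in> K" for x
  proof -
    obtain n where "n \<in> N" "g x < real n" using N(3) x by auto
    moreover have "n \<le> Max (insert 0 N)" using N(2) \<open>n \<in> N\<close> by simp
    ultimately show ?thesis by linarith
  qed
  then show ?thesis by (rule bdd_aboveI2)
qed

lemma usc_attains_max:
  fixes g :: "'a::topological_space \<Rightarrow> real"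
  assumes "usc g" "compact K" "K \<noteq> {}"
  shows "\<exists>x\<in>K. \<forall>y\<in>K. g y \<le> g x"
proof (rule ccontr)
  assume no_max: "\<not> ?thesis"
  have opn: "open {x. g x < t}" for t using assms(1) by (simp add: usc_def)
  define S where "S = Sup (g ` K)"
  have "K \<subseteq> (\<Union>t\<in>{..<S}. {x. g x < t})"
  proof
    fix x assume "x \<in> K"
    with no_max obtain y where "y \<in> K" "g x < g y" by (auto simp: not_le)
    moreover have "g y \<le> S"
      unfolding S_def using usc_bdd_above[OF assms(1,2)] \<open>y \<in> K\<close> by (simp add: cSup_upper)
    ultimately show "x \<in> (\<Union>t\<in>{..<S}. {x. g x < t})"
      by (intro UN_I[of "(g x + g y) / 2"]) simp_all
  qed
  then obtain T where T: "T \<subseteq> {..<S}" "finite T" "K \<subseteq> (\<Union>t\<in>T. {x. g x < t})"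
    by (rule compactE_image[OF assms(2) opn])
  then have "T \<noteq> {}" using assms(3) by auto
  have "g x \<le> Max T" if x: "x \<in> K" for x
  proof -
    obtain t where "t \<in> T" "g x < t" using T(3) x by auto
    with T(2) show ?thesis by (meson Max_ge less_imp_le order.trans)
  qed
  then have "S \<le> Max T" unfolding S_def using assms(3) by (intro cSup_least) auto
  moreover have "Max T < S" using T(1,2) \<open>T \<noteq> {}\<close> Max_in by blast
  ultimately show False by simp
qed

lemma usc_attains_max_fundamental_domain:
  assumes "usc g" "compact K" "K \<noteq> {}" "\<And>y. \<exists>x\<in>K. g y = g x"
  shows "\<exists>x\<in>K. \<forall>y. g y \<le> g x"
proof -
  obtain x where "x \<in> K" "\<forall>y\<in>K. g y \<le> g x" using usc_attains_max[OF assms(1-3)] by blast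
  then show ?thesis using assms(4) by metis
qed

lemma reverse_Fatou_eventually:
  fixes g :: "nat \<Rightarrow> 'a \<Rightarrow> real"
  assumes int: "\<And>n. integrable M (g n)" "integrable M h" "integrable M D"
    and bnd: "\<And>n x. g n x - h x \<le> D x" "\<And>x. 0 \<le> D x"
    and lim: "\<And>x e. e > 0 \<Longrightarrow> \<forall>\<^sub>F n in sequentially. g n x \<le> h x + e"
    and e: "e > 0"
  shows "\<forall>\<^sub>F n in sequentially. integral\<^sup>L M (g n) \<le> integral\<^sup>L M h + e"
proof -
  define G where "G n x = max (g n x - h x) 0" for n x
  have intG: "integrable M (G n)" for n unfolding G_def using int by auto
  have "(\<lambda>n. integral\<^sup>L M (G n)) \<longlonglongrightarrow> integral\<^sup>L M (\<lambda>x. 0::real)"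
  proof (rule integral_dominated_convergence[where w=D])
    show "AE x in M. (\<lambda>n. G n x) \<longlonglongrightarrow> 0"
    proof (intro AE_I2 tendstoI)
      fix x and d :: real assume "d > 0"
      then have "\<forall>\<^sub>F n in sequentially. g n x \<le> h x + d / 2" using lim by simp
      then show "\<forall>\<^sub>F n in sequentially. dist (G n x) 0 < d"
        by eventually_elim (use \<open>d > 0\<close> in \<open>auto simp: G_def\<close>)
    qed
    show "AE x in M. norm (G n x) \<le> D x" for n
      using bnd by (auto simp: G_def)
  qed (use intG int in auto)
  then have "\<forall>\<^sub>F n in sequentially. integral\<^sup>L M (G n) < e"
    using e by (simp add: order_tendstoD(2))
  then show ?thesis
  proof eventually_elim
    case (elim n)
    have "integral\<^sup>L M (g n) = integral\<^sup>L M h + integral\<^sup>L M (\<lambda>x. g n x - h x)"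
      using int by simp
    also have "integral\<^sup>L M (\<lambda>x. g n x - h x) \<le> integral\<^sup>L M (G n)"
      using int intG by (intro integral_mono) (auto simp: G_def)
    finally show ?case using elim by simp
  qed
qed

lemma AE_zero_if_set_integral_nonpos:
  fixes g :: "'a \<Rightarrow> real"
  assumes int: "set_integrable M A g" and nonneg: "\<And>x. x \<in> A \<Longrightarrow> 0 \<le> g x"
    and "(LINT x:A|M. g x) \<le> 0"
  shows "AE x in M. x \<in> A \<longrightarrow> g x = 0"
proof -
  have "AE x in M. indicator A x *\<^sub>R g x = 0"
  proof (subst integral_nonneg_eq_0_iff_AE[symmetric])
    show "integrable M (\<lambda>x. indicator A x *\<^sub>R g x)" using int by (simp add: set_integrable_def)
    show "AE x in M. 0 \<le> indicator A x *\<^sub>R g x" using nonneg by (intro AE_I2) (simp add: indicator_def)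
    have "(LINT x:A|M. 0) \<le> (LINT x:A|M. g x)"
      using nonneg by (intro set_integral_mono[OF _ int]) (auto simp: set_integrable_def)
    with \<open>(LINT x:A|M. g x) \<le> 0\<close> show "integral\<^sup>L M (\<lambda>x. indicator A x *\<^sub>R g x) = 0"
      by (simp add: set_lebesgue_integral_def)
  qed
  then show ?thesis by eventually_elim (auto simp: indicator_def)
qed

lemma modulus_tendsto_0:
  assumes "modulus \<omega>" "\<And>n. s n \<ge> 0" "s \<longlonglongrightarrow> 0"
  shows "(\<lambda>n. \<omega> (s n)) \<longlonglongrightarrow> 0"
proof (rule tendstoI)
  fix e :: real assume "e > 0"
  have "\<omega> 0 = 0" "(\<omega> \<longlongrightarrow> 0) (at_right 0)" using assms(1) by (auto simp: modulus_def)
  then obtain d where d: "d > 0" "\<And>t. 0 \<le> t \<Longrightarrow> t < d \<Longrightarrow> dist (\<omega> t) 0 < e"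
    using \<open>e > 0\<close> tendstoD[of \<omega> 0 "at_right 0" e] unfolding eventually_at_right_field
    by (metis dist_self order_le_less)
  have "\<forall>\<^sub>F n in sequentially. s n < d" using assms(3) d(1) by (simp add: order_tendstoD(2))
  then show "\<forall>\<^sub>F n in sequentially. dist (\<omega> (s n)) 0 < e"
    by eventually_elim (use d assms(2) in auto)
qed

lemma limit_nonpos_if_Suc_times_bounded:
  fixes g :: "nat \<Rightarrow> real"
  assumes "strict_mono r" "(\<lambda>n. g (r n)) \<longlonglongrightarrow> L" "\<And>n. Suc n * g n \<le> B"
  shows "L \<le> 0"
proof (rule tendsto_le[OF trivial_limit_sequentially _ assms(2)])
  show "(\<lambda>n. max 0 B / Suc n) \<longlonglongrightarrow> 0" by (rule LIMSEQ_Suc[OF lim_const_over_n])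
  have "g (r n) \<le> max 0 B / Suc n" for n
  proof -
    have "g (r n) \<le> max 0 B / Suc (r n)"
      using assms(3)[of "r n"] by (simp add: field_simps del: of_nat_Suc)
    also have "\<dots> \<le> max 0 B / Suc n"
      using seq_suble[OF assms(1), of n] by (intro divide_left_mono) auto
    finally show ?thesis .
  qed
  then show "\<forall>\<^sub>F n in sequentially. g (r n) \<le> max 0 B / Suc n" by simp
qed

lemma le_max_1_if_powr_le:
  assumes "(m::real) > 1" "t \<ge> 0" "t powr m \<le> B" shows "t \<le> max 1 B"
proof (cases "t \<le> 1")
  case False
  then have "t powr 1 \<le> t powr m" using assms by (intro powr_mono) auto
  then show ?thesis using assms False by simp
qed simp

lemma convex_on_scaleR_le:
  fixes g :: "'a::real_vector \<Rightarrow> real"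
  assumes "convex_on UNIV g" "g 0 = 0" "0 \<le> t" "t \<le> 1"
  shows "g (t *\<^sub>R z) \<le> t * g z"
  using convex_onD[OF assms(1), of t 0 z] assms(2-4) by simp

lemma le_if_theta_scaled_le:
  fixes a b c :: real
  assumes "\<And>\<theta>. 0 < \<theta> \<Longrightarrow> \<theta> < 1 \<Longrightarrow> \<theta> * a - b \<le> (1 - \<theta>) * c"
  shows "a \<le> b"
proof -
  have "\<forall>\<^sub>F \<theta> in at_left (1::real). \<theta> \<in> {0<..<1}"
    by (rule eventually_at_left_real) simp
  then have ev: "\<forall>\<^sub>F \<theta> in at_left (1::real). \<theta> * a - b - (1 - \<theta>) * c \<le> 0"
    by eventually_elim (use assms in auto)
  have "((\<lambda>\<theta>. \<theta> * a - b - (1 - \<theta>) * c) \<longlongrightarrow> 1 * a - b - (1 - 1) * c) (at_left 1)"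
    by (intro tendsto_intros)
  from this ev have "1 * a - b - (1 - 1) * c \<le> 0"
    by (rule tendsto_upperbound) simp
  then show ?thesis by simp
qed

section \<open>The comparison argument for fixed theta\<close>

locale comparison_setup =
  fixes I :: "real set" and k :: "real \<Rightarrow> real \<Rightarrow> real"
    and F :: "real^'n \<Rightarrow> real^'n \<Rightarrow> real \<Rightarrow> real"
    and f u v :: "real^'n \<Rightarrow> real \<Rightarrow> real"
    and k0 k1 C1 C2 m Bf Mu Mv \<theta> :: real
  assumes I_int: "is_interval I" "bounded I" "measure lborel I = 1"
    and k_meas: "(\<lambda>p. k (fst p) (snd p)) \<in> borel_measurable (restrict_space borel (I \<times> I))"
    and k_bds: "0 < k0" "\<And>\<xi> \<eta>. \<xi> \<in> I \<Longrightarrow> \<eta> \<in> I \<Longrightarrow> k0 \<le> k \<xi> \<eta> \<and> k \<xi> \<eta> \<le> k1"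
    and F_per: "\<And>p \<xi>. periodic_fn (\<lambda>x. F x p \<xi>)"
    and f_per: "\<And>\<xi>. periodic_fn (\<lambda>x. f x \<xi>)"
    and f_cont: "\<And>\<xi>. \<xi> \<in> I \<Longrightarrow> continuous_on UNIV (\<lambda>x. f x \<xi>)"
    and f_bdd: "\<And>x \<xi>. \<xi> \<in> I \<Longrightarrow> \<bar>f x \<xi>\<bar> \<le> Bf"
    and F_coercive: "C1 > 0" "m > 1" "\<And>x p \<xi>. \<xi> \<in> I \<Longrightarrow> C1 * norm p powr m - C2 \<le> F x p \<xi>"
    and f_nonneg: "\<And>x \<xi>. \<xi> \<in> I \<Longrightarrow> f x \<xi> \<ge> 0"
    and F_convex: "\<And>x \<xi>. \<xi> \<in> I \<Longrightarrow> convex_on UNIV (\<lambda>p. F x p \<xi>)"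
    and F_0: "\<And>x \<xi>. \<xi> \<in> I \<Longrightarrow> F x 0 \<xi> = 0"
    and F_modulus: "\<And>R. R > 0 \<Longrightarrow> \<exists>\<omega>. modulus \<omega> \<and> (\<forall>x y p q. \<forall>\<xi>\<in>I. norm p < R \<longrightarrow> norm q < R \<longrightarrow>
                 \<bar>F x p \<xi> - F y q \<xi>\<bar> \<le> \<omega> (dist x y + dist p q))"
    and u_cls: "U_plus I u" and v_cls: "U_minus I v"
    and u_sub: "viscosity_subsolution I F k f u"
    and v_super: "viscosity_supersolution I F k f v"
    and u_bdd: "\<And>x \<xi>. \<xi> \<in> I \<Longrightarrow> u x \<xi> \<le> Mu"
    and v_bdd: "\<And>x \<xi>. \<xi> \<in> I \<Longrightarrow> - v x \<xi> \<le> Mv"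
    and theta: "0 < \<theta>" "\<theta> < 1"
begin

definition w :: "real^'n \<Rightarrow> real \<Rightarrow> real" where
  "w x \<xi> = \<theta> * u x \<xi> - v x \<xi>"

lemma sets_I: "I \<in> sets lborel"
  using I_int(1) by (simp add: real_interval_borel_measurable)

lemma emeasure_I: "emeasure lborel I = 1"
proof -
  have "emeasure lborel I < \<infinity>" using I_int(2) by (rule emeasure_bounded_finite)
  then show ?thesis using I_int(3) emeasure_eq_ennreal_measure[of lborel I] by simp
qed

lemma k1_nonneg: "k1 \<ge> 0"
proof -
  obtain \<xi> where "\<xi> \<in> I" using emeasure_I by fastforce
  then show ?thesis using k_bds(1) k_bds(2)[of \<xi> \<xi>] by linarith
qed

lemma periodic_u: "periodic_fn u" and periodic_v: "periodic_fn v" and periodic_w: "periodic_fn w"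
proof -
  show "periodic_fn u" using u_cls by (simp add: U_plus_def)
  have "periodic_fn (\<lambda>x \<xi>. - v x \<xi>)" using v_cls by (simp add: U_minus_def U_plus_def)
  then show "periodic_fn v" unfolding periodic_fn_def by (metis minus_equation_iff ext)
  with \<open>periodic_fn u\<close> show "periodic_fn w" by (simp add: periodic_fn_def w_def fun_eq_iff)
qed

lemma usc_u: "\<xi> \<in> I \<Longrightarrow> usc (\<lambda>x. u x \<xi>)"
  and usc_neg_v: "\<xi> \<in> I \<Longrightarrow> usc (\<lambda>x. - v x \<xi>)"
  using u_cls v_cls by (auto simp: U_minus_def U_plus_def)

lemma usc_doubled_w:
  assumes "\<xi> \<in> I" shows "usc (\<lambda>(x, y). \<theta> * u x \<xi> - v y \<xi>)"
proof -
  have "usc (\<lambda>p. \<theta> * u (fst p) \<xi>)"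
    by (rule usc_compose_continuous[OF usc_cmult[OF usc_u[OF assms] theta(1)]]) (intro continuous_intros)
  moreover have "usc (\<lambda>p. - v (snd p) \<xi>)"
    by (rule usc_compose_continuous[OF usc_neg_v[OF assms]]) (intro continuous_intros)
  ultimately have "usc (\<lambda>p. \<theta> * u (fst p) \<xi> + - v (snd p) \<xi>)" by (rule usc_add)
  then show ?thesis by (simp add: case_prod_beta')
qed

lemma usc_w: "\<xi> \<in> I \<Longrightarrow> usc (\<lambda>x. w x \<xi>)"
  using usc_add[OF usc_cmult[OF usc_u theta(1)] usc_neg_v] by (simp add: w_def)

lemma doubled_w_le_bound:
  assumes "\<xi> \<in> I" shows "\<theta> * u x \<xi> - v y \<xi> \<le> \<theta> * Mu + Mv"
proof -
  have "\<theta> * u x \<xi> \<le> \<theta> * Mu" using u_bdd[OF assms] theta(1) by simp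
  then show ?thesis using v_bdd[OF assms, of y] by linarith
qed

lemma w_le_bound: "\<xi> \<in> I \<Longrightarrow> w x \<xi> \<le> \<theta> * Mu + Mv"
  using doubled_w_le_bound by (simp add: w_def)

lemma set_integrable_const: "set_integrable lborel I (\<lambda>_. c :: real)"
proof -
  have "emeasure lborel I < \<infinity>" by (simp add: emeasure_I)
  then have "integrable lborel (\<lambda>\<zeta>. c * indicator I \<zeta>)"
    by (intro integrable_mult_right integrable_real_indicator sets_I)
  then show ?thesis by (simp add: set_integrable_def mult.commute)
qed

lemma set_integral_const_I: "(LINT \<zeta>:I|lborel. c) = (c :: real)"
  using set_integral_const[OF sets_I, of c] emeasure_I I_int(3) by simp

lemma set_integrable_u: "set_integrable lborel I (u x)"
  using u_cls by (simp add: U_plus_def)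

lemma set_integrable_v: "set_integrable lborel I (v x)"
proof -
  have "set_integrable lborel I (\<lambda>\<zeta>. - v x \<zeta>)" using v_cls by (simp add: U_minus_def U_plus_def)
  then show ?thesis using set_integrable_mult_right[of "-1" lborel I "\<lambda>\<zeta>. - v x \<zeta>"] by simp
qed

lemma set_integrable_doubled_w: "set_integrable lborel I (\<lambda>\<zeta>. \<theta> * u x \<zeta> - v y \<zeta>)"
  by (intro set_integral_diff(1) set_integrable_mult_right set_integrable_u set_integrable_v)

lemma set_integrable_w: "set_integrable lborel I (w x)"
  using set_integrable_doubled_w[of x x] by (simp add: w_def[abs_def])

lemma set_integrable_weighted:
  fixes g \<kappa> :: "real \<Rightarrow> real"
  assumes g: "set_integrable lborel I g" and \<kappa>: "\<kappa> \<in> borel_measurable (restrict_space borel I)"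
    and bnd: "\<And>\<zeta>. \<zeta> \<in> I \<Longrightarrow> \<bar>\<kappa> \<zeta>\<bar> \<le> K"
  shows "set_integrable lborel I (\<lambda>\<zeta>. \<kappa> \<zeta> * g \<zeta>)"
proof (rule set_integrable_bound[where f="\<lambda>\<zeta>. K * g \<zeta>"])
  show "set_integrable lborel I (\<lambda>\<zeta>. K * g \<zeta>)" using g by simp
  have "(\<lambda>\<zeta>. indicator I \<zeta> *\<^sub>R \<kappa> \<zeta>) \<in> borel_measurable lborel"
    using \<kappa> sets_I by (subst (asm) borel_measurable_restrict_space_iff) auto
  moreover have "(\<lambda>\<zeta>. indicator I \<zeta> *\<^sub>R g \<zeta>) \<in> borel_measurable lborel"
    using g by (auto simp: set_integrable_def)
  ultimately have "(\<lambda>\<zeta>. (indicator I \<zeta> *\<^sub>R \<kappa> \<zeta>) * (indicator I \<zeta> *\<^sub>R g \<zeta>)) \<in> borel_measurable lborel"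
    by (rule borel_measurable_times)
  then show "set_borel_measurable lborel I (\<lambda>\<zeta>. \<kappa> \<zeta> * g \<zeta>)"
    unfolding set_borel_measurable_def by (rule measurable_cong[THEN iffD1, rotated]) (auto simp: indicator_def)
  show "AE \<zeta> in lborel. \<zeta> \<in> I \<longrightarrow> norm (\<kappa> \<zeta> * g \<zeta>) \<le> norm (K * g \<zeta>)"
  proof (intro AE_I2 impI)
    fix \<zeta> assume "\<zeta> \<in> I"
    then have "\<bar>\<kappa> \<zeta>\<bar> \<le> \<bar>K\<bar>" using bnd by force
    then show "norm (\<kappa> \<zeta> * g \<zeta>) \<le> norm (K * g \<zeta>)" by (simp add: abs_mult mult_right_mono)
  qed
qed

lemma kernel_measurable: "\<xi> \<in> I \<Longrightarrow> k \<xi> \<in> borel_measurable (restrict_space borel I)"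
proof -
  assume "\<xi> \<in> I"
  then have "(\<lambda>\<zeta>. (\<xi>, \<zeta>)) \<in> restrict_space borel I \<rightarrow>\<^sub>M restrict_space borel (I \<times> I)"
    by (intro measurable_restrict_space3) auto
  from measurable_comp[OF this k_meas] show ?thesis by (simp add: comp_def)
qed

lemma kernel_nonneg: "\<xi> \<in> I \<Longrightarrow> \<zeta> \<in> I \<Longrightarrow> 0 \<le> k \<xi> \<zeta> \<and> k \<xi> \<zeta> \<le> k1"
  using k_bds by (meson less_imp_le order_trans)

lemma set_integrable_kernel_mult:
  "\<xi> \<in> I \<Longrightarrow> set_integrable lborel I g \<Longrightarrow> set_integrable lborel I (\<lambda>\<zeta>. k \<xi> \<zeta> * g \<zeta>)"
  using kernel_nonneg by (intro set_integrable_weighted[OF _ kernel_measurable, of _ _ k1]) auto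

definition kernel_mass :: "real \<Rightarrow> real" where
  "kernel_mass \<xi> = (LINT \<zeta>:I|lborel. k \<xi> \<zeta>)"

lemma kernel_mass_bounds: "\<xi> \<in> I \<Longrightarrow> 0 \<le> kernel_mass \<xi> \<and> kernel_mass \<xi> \<le> k1"
proof -
  assume "\<xi> \<in> I"
  have int: "set_integrable lborel I (k \<xi>)"
    using set_integrable_kernel_mult[OF \<open>\<xi> \<in> I\<close> set_integrable_const[of 1]] by simp
  have "0 \<le> kernel_mass \<xi>"
    unfolding kernel_mass_def using set_integral_mono[OF set_integrable_const int] kernel_nonneg \<open>\<xi> \<in> I\<close>
    by force
  moreover have "kernel_mass \<xi> \<le> (LINT \<zeta>:I|lborel. k1)"
    unfolding kernel_mass_def using kernel_nonneg \<open>\<xi> \<in> I\<close> by (intro set_integral_mono int set_integrable_const) auto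
  ultimately show ?thesis by (simp add: set_integral_const_I)
qed

lemma nonlocal_term_eq:
  assumes "\<xi> \<in> I" "set_integrable lborel I (g x)"
  shows "nonlocal_term I k g x \<xi> = g x \<xi> * kernel_mass \<xi> - (LINT \<zeta>:I|lborel. k \<xi> \<zeta> * g x \<zeta>)"
proof -
  have "nonlocal_term I k g x \<xi> = (LINT \<zeta>:I|lborel. g x \<xi> * k \<xi> \<zeta> - k \<xi> \<zeta> * g x \<zeta>)"
    unfolding nonlocal_term_def by (simp add: algebra_simps)
  also have "\<dots> = g x \<xi> * kernel_mass \<xi> - (LINT \<zeta>:I|lborel. k \<xi> \<zeta> * g x \<zeta>)"
    using set_integrable_kernel_mult[OF assms(1) set_integrable_const[of 1]]
      set_integrable_kernel_mult[OF assms]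
    by (simp add: kernel_mass_def)
  finally show ?thesis .
qed

lemma doubled_w_eventually_less:
  assumes "\<zeta> \<in> I" "X \<longlonglongrightarrow> xs" "Y \<longlonglongrightarrow> ys" "d > 0"
  shows "\<forall>\<^sub>F n in sequentially. \<theta> * u (X n) \<zeta> - v (Y n) \<zeta> < \<theta> * u xs \<zeta> - v ys \<zeta> + d"
  using usc_eventually_less[OF usc_doubled_w[OF assms(1)] tendsto_Pair[OF assms(2,3)]] assms(4) by simp

lemma weighted_doubled_w_eventually_le:
  assumes "\<zeta> \<in> I" "0 \<le> c" "c \<le> K" "X \<longlonglongrightarrow> xs" "Y \<longlonglongrightarrow> ys" "d > 0"
  shows "\<forall>\<^sub>F n in sequentially. c * (\<theta> * u (X n) \<zeta> - v (Y n) \<zeta>) \<le> c * (\<theta> * u xs \<zeta> - v ys \<zeta>) + d"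
proof -
  have "\<forall>\<^sub>F n in sequentially. \<theta> * u (X n) \<zeta> - v (Y n) \<zeta> < \<theta> * u xs \<zeta> - v ys \<zeta> + d / (K + 1)"
    using assms by (intro doubled_w_eventually_less) simp_all
  then show ?thesis
  proof eventually_elim
    case (elim n)
    have "c * (\<theta> * u (X n) \<zeta> - v (Y n) \<zeta>) \<le> c * (\<theta> * u xs \<zeta> - v ys \<zeta> + d / (K + 1))"
      using elim assms(2) by (intro mult_left_mono) auto
    also have "\<dots> \<le> c * (\<theta> * u xs \<zeta> - v ys \<zeta>) + (K + 1) * (d / (K + 1))"
      using assms(2,3,6) by (simp add: distrib_left mult_right_mono del: times_divide_eq_right)
    finally show ?case using assms(2,3) by simp
  qed
qed

lemma weighted_doubled_w_limsup:
  assumes \<kappa>: "\<kappa> \<in> borel_measurable (restrict_space borel I)" "\<And>\<zeta>. \<zeta> \<in> I \<Longrightarrow> 0 \<le> \<kappa> \<zeta> \<and> \<kappa> \<zeta> \<le> K"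
    and lim: "X \<longlonglongrightarrow> xs" "Y \<longlonglongrightarrow> ys" and "e > 0"
  shows "\<forall>\<^sub>F n in sequentially. (LINT \<zeta>:I|lborel. \<kappa> \<zeta> * (\<theta> * u (X n) \<zeta> - v (Y n) \<zeta>))
           \<le> (LINT \<zeta>:I|lborel. \<kappa> \<zeta> * (\<theta> * u xs \<zeta> - v ys \<zeta>)) + e"
proof -
  define B where "B = \<theta> * Mu + Mv"
  have K: "K \<ge> 0" if "\<zeta> \<in> I" for \<zeta> using \<kappa>(2)[OF that] by linarith
  have int: "set_integrable lborel I (\<lambda>\<zeta>. \<kappa> \<zeta> * (\<theta> * u x \<zeta> - v y \<zeta>))" for x y
    using \<kappa> by (intro set_integrable_weighted[OF set_integrable_doubled_w, of _ K]) auto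
  have "\<forall>\<^sub>F n in sequentially. integral\<^sup>L lborel (\<lambda>\<zeta>. indicator I \<zeta> *\<^sub>R (\<kappa> \<zeta> * (\<theta> * u (X n) \<zeta> - v (Y n) \<zeta>)))
      \<le> integral\<^sup>L lborel (\<lambda>\<zeta>. indicator I \<zeta> *\<^sub>R (\<kappa> \<zeta> * (\<theta> * u xs \<zeta> - v ys \<zeta>))) + e"
  proof (rule reverse_Fatou_eventually[where D="\<lambda>\<zeta>. indicator I \<zeta> * (K * (B - (\<theta> * u xs \<zeta> - v ys \<zeta>)))"])
    show "integrable lborel (\<lambda>\<zeta>. indicator I \<zeta> * (K * (B - (\<theta> * u xs \<zeta> - v ys \<zeta>))))"
    proof -
      have "set_integrable lborel I (\<lambda>\<zeta>. K * (B - (\<theta> * u xs \<zeta> - v ys \<zeta>)))"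
        by (intro set_integrable_mult_right set_integral_diff(1) set_integrable_const set_integrable_doubled_w)
      then show ?thesis by (simp add: set_integrable_def)
    qed
    show "0 \<le> indicator I \<zeta> * (K * (B - (\<theta> * u xs \<zeta> - v ys \<zeta>)))" for \<zeta>
      using doubled_w_le_bound[of \<zeta> xs ys] K by (simp add: B_def indicator_def)
    show "indicator I \<zeta> *\<^sub>R (\<kappa> \<zeta> * (\<theta> * u (X n) \<zeta> - v (Y n) \<zeta>))
        - indicator I \<zeta> *\<^sub>R (\<kappa> \<zeta> * (\<theta> * u xs \<zeta> - v ys \<zeta>))
        \<le> indicator I \<zeta> * (K * (B - (\<theta> * u xs \<zeta> - v ys \<zeta>)))" for n \<zeta>
    proof (cases "\<zeta> \<in> I")
      case True
      have "\<kappa> \<zeta> * (\<theta> * u (X n) \<zeta> - v (Y n) \<zeta> - (\<theta> * u xs \<zeta> - v ys \<zeta>))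
          \<le> \<kappa> \<zeta> * (B - (\<theta> * u xs \<zeta> - v ys \<zeta>))"
        using \<kappa>(2)[OF True] doubled_w_le_bound[OF True] by (intro mult_left_mono) (auto simp: B_def)
      also have "\<dots> \<le> K * (B - (\<theta> * u xs \<zeta> - v ys \<zeta>))"
        using \<kappa>(2)[OF True] doubled_w_le_bound[OF True] by (intro mult_right_mono) (auto simp: B_def)
      finally show ?thesis using True by (simp add: algebra_simps)
    qed simp
    show "\<forall>\<^sub>F n in sequentially. indicator I \<zeta> *\<^sub>R (\<kappa> \<zeta> * (\<theta> * u (X n) \<zeta> - v (Y n) \<zeta>))
        \<le> indicator I \<zeta> *\<^sub>R (\<kappa> \<zeta> * (\<theta> * u xs \<zeta> - v ys \<zeta>)) + d" if "d > 0" for \<zeta> d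
    proof (cases "\<zeta> \<in> I")
      case True
      have "0 \<le> \<kappa> \<zeta>" "\<kappa> \<zeta> \<le> K" using \<kappa>(2)[OF True] by auto
      from weighted_doubled_w_eventually_le[OF True this lim \<open>d > 0\<close>] show ?thesis
        using True by simp
    qed (use \<open>d > 0\<close> in simp)
  qed (use int \<open>e > 0\<close> in \<open>auto simp: set_integrable_def\<close>)
  then show ?thesis by (simp add: set_lebesgue_integral_def)
qed

subsection \<open>Doubling of variables at a maximum point\<close>

text \<open>The term torus_penalty (x - x0) pins the maximizers to the lattice class of x0 in the limit.\<close>

definition doubling :: "real \<Rightarrow> real \<Rightarrow> real^'n \<Rightarrow> real^'n \<Rightarrow> real^'n \<Rightarrow> real" where
  "doubling \<eta> N x0 x y =
     \<theta> * u x \<eta> - v y \<eta> - N * torus_penalty (x - y) - torus_penalty (x - x0)"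

lemma doubling_attains_max:
  assumes "\<eta> \<in> I"
  shows "\<exists>a\<in>cbox 0 1. \<exists>b\<in>cbox 0 1. \<forall>x y. doubling \<eta> N x0 x y \<le> doubling \<eta> N x0 a b"
proof -
  let ?g = "\<lambda>(x, y). doubling \<eta> N x0 x y"
  have "continuous_on UNIV (\<lambda>p. - N * torus_penalty (fst p - snd p) - torus_penalty (fst p - x0))"
    by (intro continuous_intros continuous_on_compose2[OF continuous_on_torus_penalty]) auto
  from usc_add[OF usc_doubled_w[OF assms] usc_continuous[OF this]]
  have "usc ?g" by (simp add: doubling_def case_prod_beta' algebra_simps)
  moreover have "\<exists>q\<in>cbox 0 1 \<times> cbox 0 1. ?g p = ?g q" for p
  proof -
    obtain x y where p: "p = (x, y)" by fastforce
    obtain x' y' where x': "x' \<in> cbox 0 1" "x - x' \<in> int_lattice"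
      and y': "y' \<in> cbox 0 1" "y - y' \<in> int_lattice"
      using int_lattice_representative_in_unit_cube by metis
    have "(x - y) - (x' - y') \<in> int_lattice"
      using int_lattice_diff[OF x'(2) y'(2)] by (simp add: algebra_simps)
    moreover have "(x - x0) - (x' - x0) \<in> int_lattice" using x'(2) by simp
    ultimately show ?thesis unfolding p doubling_def
      using x' y' by (intro bexI[of _ "(x', y')"])
        (simp_all add: periodic_fn_eq_mod_int_lattice[OF periodic_u] periodic_fn_eq_mod_int_lattice[OF periodic_v]
          periodic_fn_eq_mod_int_lattice[OF periodic_torus_penalty])
  qed
  moreover have "cbox 0 1 \<times> cbox 0 1 \<noteq> ({} :: ((real^'n) \<times> (real^'n)) set)"
    using int_lattice_representative_in_unit_cube by blast
  ultimately have "\<exists>q\<in>cbox 0 1 \<times> cbox 0 1. \<forall>p. ?g p \<le> ?g q"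
    by (intro usc_attains_max_fundamental_domain compact_Times compact_cbox)
  then show ?thesis by auto
qed

lemma doubling_max_lower_bound:
  assumes "doubling \<eta> N x0 x0 x0 \<le> doubling \<eta> N x0 a b"
  shows "w x0 \<eta> + N * torus_penalty (a - b) + torus_penalty (a - x0) \<le> \<theta> * u a \<eta> - v b \<eta>"
proof -
  have "torus_penalty (0 :: real^'n) = 0" by (simp add: torus_penalty_eq_0_iff)
  from this assms show ?thesis by (simp add: doubling_def w_def)
qed

lemma subsolution_at_doubling_max:
  assumes "\<eta> \<in> I" "\<And>x. doubling \<eta> N x0 x b \<le> doubling \<eta> N x0 a b"
  shows "F a ((1 / \<theta>) *\<^sub>R (N *\<^sub>R torus_penalty_grad (a - b) + torus_penalty_grad (a - x0))) \<eta>
           + nonlocal_term I k u a \<eta> \<le> f a \<eta>"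
proof -
  let ?\<phi> = "\<lambda>y. (1 / \<theta>) * (v b \<eta> + (N * torus_penalty (y - b) + torus_penalty (y - x0)))"
  have "C1_test ?\<phi> (\<lambda>y. (1 / \<theta>) *\<^sub>R (0 + (N *\<^sub>R torus_penalty_grad (y - b) + torus_penalty_grad (y - x0))))"
    by (intro C1_test_cmult C1_test_add C1_test_const C1_test_torus_penalty_shift)
  moreover have "u y \<eta> - ?\<phi> y = doubling \<eta> N x0 y b / \<theta>" for y
    using theta(1) by (simp add: doubling_def field_simps)
  then have "\<exists>e>0. \<forall>y. dist y a < e \<longrightarrow> u y \<eta> - ?\<phi> y \<le> u a \<eta> - ?\<phi> a"
    using assms(2) theta(1) by (auto intro!: exI[of _ 1] divide_right_mono)
  ultimately show ?thesis
    using u_sub assms(1) unfolding viscosity_subsolution_def by fastforce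
qed

lemma supersolution_at_doubling_max:
  assumes "\<eta> \<in> I" "\<And>y. doubling \<eta> N x0 a y \<le> doubling \<eta> N x0 a b"
  shows "f b \<eta> \<le> F b (N *\<^sub>R torus_penalty_grad (a - b)) \<eta> + nonlocal_term I k v b \<eta>"
proof -
  let ?\<psi> = "\<lambda>y. (\<theta> * u a \<eta> - torus_penalty (a - x0)) + (- N) * torus_penalty (a - y)"
  have "C1_test ?\<psi> (\<lambda>y. 0 + (- N) *\<^sub>R (- torus_penalty_grad (a - y)))"
    by (intro C1_test_cmult C1_test_add C1_test_const C1_test_torus_penalty_reflect)
  moreover have "v y \<eta> - ?\<psi> y = - doubling \<eta> N x0 a y" for y
    by (simp add: doubling_def)
  then have "\<exists>e>0. \<forall>y. dist y b < e \<longrightarrow> v y \<eta> - ?\<psi> y \<ge> v b \<eta> - ?\<psi> b"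
    using assms(2) by (auto intro!: exI[of _ 1])
  ultimately show ?thesis
    using v_super assms(1) unfolding viscosity_supersolution_def by fastforce
qed

lemma doubling_limit_in_lattice_class_of_x0:
  assumes \<eta>: "\<eta> \<in> I" and max_w: "\<And>x. w x \<eta> \<le> w x0 \<eta>"
    and low: "\<And>n. w x0 \<eta> + torus_penalty (A n - x0) \<le> \<theta> * u (A n) \<eta> - v (B n) \<eta>"
    and lim: "A \<longlonglongrightarrow> as" "B \<longlonglongrightarrow> bs" and "as - bs \<in> int_lattice"
  shows "as - x0 \<in> int_lattice"
proof -
  have "torus_penalty (as - x0) \<le> 0"
  proof (rule ccontr)
    assume "\<not> torus_penalty (as - x0) \<le> 0"
    then have pos: "torus_penalty (as - x0) / 2 > 0" by simp
    have "v bs \<eta> = v as \<eta>"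
      using periodic_fn_eq_mod_int_lattice[OF periodic_v, of bs as] \<open>as - bs \<in> int_lattice\<close>
        int_lattice_uminus[of "as - bs"] by simp
    then have "\<theta> * u as \<eta> - v bs \<eta> \<le> w x0 \<eta>" using max_w[of as] by (simp add: w_def)
    with doubled_w_eventually_less[OF \<eta> lim pos]
    have "\<forall>\<^sub>F n in sequentially. \<theta> * u (A n) \<eta> - v (B n) \<eta> < w x0 \<eta> + torus_penalty (as - x0) / 2"
      by (auto elim: eventually_mono)
    moreover have "(\<lambda>n. torus_penalty (A n - x0)) \<longlonglongrightarrow> torus_penalty (as - x0)"
      by (intro continuous_on_tendsto_compose[OF continuous_on_torus_penalty] tendsto_diff lim tendsto_const)
        auto
    then have "\<forall>\<^sub>F n in sequentially. torus_penalty (A n - x0) > torus_penalty (as - x0) / 2"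
      using pos by (intro order_tendstoD(1)) auto
    ultimately have "\<forall>\<^sub>F n in sequentially. False"
    proof eventually_elim
      case (elim n)
      then show ?case using low[of n] by linarith
    qed
    then show False by simp
  qed
  then have "torus_penalty (as - x0) = 0" using torus_penalty_nonneg[of "as - x0"] by linarith
  then show ?thesis by (simp add: torus_penalty_eq_0_iff)
qed

lemma doubling_maximizers_converge:
  assumes \<eta>: "\<eta> \<in> I" and max_w: "\<And>x. w x \<eta> \<le> w x0 \<eta>"
    and ab: "\<And>n. (a n, b n) \<in> cbox 0 1 \<times> cbox 0 1"
    and max: "\<And>n x y. doubling \<eta> (Suc n) x0 x y \<le> doubling \<eta> (Suc n) x0 (a n) (b n)"
  obtains r as bs where "strict_mono r" "(\<lambda>n. a (r n)) \<longlonglongrightarrow> as" "(\<lambda>n. b (r n)) \<longlonglongrightarrow> bs"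
    "as - x0 \<in> int_lattice" "bs - x0 \<in> int_lattice"
proof -
  have low: "w x0 \<eta> + Suc n * torus_penalty (a n - b n) + torus_penalty (a n - x0)
      \<le> \<theta> * u (a n) \<eta> - v (b n) \<eta>" for n
    using doubling_max_lower_bound[OF max] by simp
  have "seq_compact (cbox 0 1 \<times> cbox (0::real^'n) 1)"
    by (intro compact_imp_seq_compact compact_Times compact_cbox)
  moreover have "\<forall>n. (a n, b n) \<in> cbox 0 1 \<times> cbox 0 1" using ab by blast
  ultimately obtain l r where r: "strict_mono r" and lim: "((\<lambda>n. (a n, b n)) \<circ> r) \<longlonglongrightarrow> l"
    by (rule seq_compactE)
  obtain as bs where l: "l = (as, bs)" by fastforce
  have lim_a: "(\<lambda>n. a (r n)) \<longlonglongrightarrow> as" and lim_b: "(\<lambda>n. b (r n)) \<longlonglongrightarrow> bs"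
    using tendsto_fst[OF lim] tendsto_snd[OF lim] by (simp_all add: l comp_def)
  have "torus_penalty (as - bs) \<le> 0"
  proof (rule limit_nonpos_if_Suc_times_bounded[OF r])
    show "(\<lambda>n. torus_penalty (a (r n) - b (r n))) \<longlonglongrightarrow> torus_penalty (as - bs)"
      by (intro continuous_on_tendsto_compose[OF continuous_on_torus_penalty] tendsto_diff lim_a lim_b) auto
    show "Suc n * torus_penalty (a n - b n) \<le> \<theta> * Mu + Mv - w x0 \<eta>" for n
      using low[of n] doubled_w_le_bound[OF \<eta>, of "a n" "b n"] torus_penalty_nonneg[of "a n - x0"] by simp
  qed
  then have "torus_penalty (as - bs) = 0" using torus_penalty_nonneg[of "as - bs"] by linarith
  then have as_bs: "as - bs \<in> int_lattice" by (simp add: torus_penalty_eq_0_iff)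
  have "w x0 \<eta> + torus_penalty (a (r n) - x0) \<le> \<theta> * u (a (r n)) \<eta> - v (b (r n)) \<eta>" for n
    using low[of "r n"] mult_nonneg_nonneg[OF _ torus_penalty_nonneg, of "Suc (r n)" "a (r n) - b (r n)"]
    by simp
  from doubling_limit_in_lattice_class_of_x0[OF \<eta> max_w this lim_a lim_b as_bs]
  have "as - x0 \<in> int_lattice" .
  moreover have "bs - x0 \<in> int_lattice"
    using int_lattice_diff[OF \<open>as - x0 \<in> int_lattice\<close> as_bs] by (simp add: algebra_simps)
  ultimately show ?thesis using that r lim_a lim_b by blast
qed

lemma subsolution_gradient_bound:
  assumes \<eta>: "\<eta> \<in> I" and sub: "F a z \<eta> + nonlocal_term I k u a \<eta> \<le> f a \<eta>" and L: "L \<le> u a \<eta>"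
  shows "norm z \<le> max 1 ((Bf + \<bar>L - Mu\<bar> * k1 + C2) / C1)"
proof -
  note int_u = set_integrable_u[of a]
  have K: "0 \<le> kernel_mass \<eta>" "kernel_mass \<eta> \<le> k1" using kernel_mass_bounds[OF \<eta>] by auto
  have "(LINT \<zeta>:I|lborel. k \<eta> \<zeta> * u a \<zeta>) \<le> (LINT \<zeta>:I|lborel. k \<eta> \<zeta> * Mu)"
    using kernel_nonneg[OF \<eta>] u_bdd
    by (intro set_integral_mono set_integrable_kernel_mult[OF \<eta>] int_u set_integrable_const mult_left_mono) auto
  also have "\<dots> = Mu * kernel_mass \<eta>" by (simp add: kernel_mass_def mult.commute)
  finally have "(L - Mu) * kernel_mass \<eta> \<le> nonlocal_term I k u a \<eta>"
    using nonlocal_term_eq[OF \<eta>, where g=u and x=a, OF int_u] mult_right_mono[OF L K(1)] by (simp add: left_diff_distrib)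
  moreover have "- \<bar>L - Mu\<bar> * kernel_mass \<eta> \<le> (L - Mu) * kernel_mass \<eta>"
    using K by (intro mult_right_mono) auto
  moreover have "\<bar>L - Mu\<bar> * kernel_mass \<eta> \<le> \<bar>L - Mu\<bar> * k1"
    using K by (intro mult_left_mono) auto
  ultimately have "C1 * norm z powr m - C2 \<le> Bf + \<bar>L - Mu\<bar> * k1"
    using F_coercive(3)[OF \<eta>, where x=a and p=z] sub f_bdd[OF \<eta>, of a] by linarith
  then have "norm z powr m \<le> (Bf + \<bar>L - Mu\<bar> * k1 + C2) / C1"
    using F_coercive(1) by (simp add: field_simps)
  then show ?thesis by (rule le_max_1_if_powr_le[OF F_coercive(2) norm_ge_zero])
qed

text \<open>Theta times the viscosity inequality for u at a minus the one for v at b.  Convexity and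
  F(a,0) = 0 give F(a, p + q) <= theta F(a, (p + q) / theta), which absorbs the factor theta.\<close>

lemma doubling_max_inequality:
  assumes \<eta>: "\<eta> \<in> I" and "N \<ge> 0" and max: "\<And>x y. doubling \<eta> N x0 x y \<le> doubling \<eta> N x0 a b"
  defines "p \<equiv> N *\<^sub>R torus_penalty_grad (a - b)" and "q \<equiv> torus_penalty_grad (a - x0)"
  shows "F a (p + q) \<eta> - F b p \<eta> + w x0 \<eta> * kernel_mass \<eta>
           - (LINT \<zeta>:I|lborel. k \<eta> \<zeta> * (\<theta> * u a \<zeta> - v b \<zeta>)) \<le> \<theta> * f a \<eta> - f b \<eta>"
proof -
  note int_u = set_integrable_u[of a] and int_v = set_integrable_v[of b]
  have sub: "F a ((1 / \<theta>) *\<^sub>R (p + q)) \<eta> + nonlocal_term I k u a \<eta> \<le> f a \<eta>"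
    using subsolution_at_doubling_max[OF \<eta> max] by (simp add: p_def q_def)
  have super: "f b \<eta> \<le> F b p \<eta> + nonlocal_term I k v b \<eta>"
    using supersolution_at_doubling_max[OF \<eta> max] by (simp add: p_def)
  have "F a (p + q) \<eta> \<le> \<theta> * F a ((1 / \<theta>) *\<^sub>R (p + q)) \<eta>"
    using convex_on_scaleR_le[OF F_convex[OF \<eta>] F_0[OF \<eta>], where t=\<theta> and z="(1 / \<theta>) *\<^sub>R (p + q)"] theta
    by simp
  moreover have "w x0 \<eta> * kernel_mass \<eta> \<le> (\<theta> * u a \<eta> - v b \<eta>) * kernel_mass \<eta>"
    using doubling_max_lower_bound[OF max] torus_penalty_nonneg[of "a - x0"] kernel_mass_bounds[OF \<eta>]
      mult_nonneg_nonneg[OF \<open>N \<ge> 0\<close> torus_penalty_nonneg[of "a - b"]]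
    by (intro mult_right_mono) auto
  moreover have "\<theta> * nonlocal_term I k u a \<eta> - nonlocal_term I k v b \<eta>
      = (\<theta> * u a \<eta> - v b \<eta>) * kernel_mass \<eta> - (LINT \<zeta>:I|lborel. k \<eta> \<zeta> * (\<theta> * u a \<zeta> - v b \<zeta>))"
    using set_integrable_kernel_mult[OF \<eta> int_u] set_integrable_kernel_mult[OF \<eta> int_v]
    by (simp add: nonlocal_term_eq[OF \<eta>, where g=u and x=a, OF int_u] nonlocal_term_eq[OF \<eta>, where g=v and x=b, OF int_v] algebra_simps)
  moreover have "\<theta> * (F a ((1 / \<theta>) *\<^sub>R (p + q)) \<eta> + nonlocal_term I k u a \<eta>) \<le> \<theta> * f a \<eta>"
    using sub theta(1) by (intro mult_left_mono) auto
  ultimately show ?thesis using super by (simp add: distrib_left)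
qed

lemma F_shifted_difference_eventually_ge:
  assumes \<eta>: "\<eta> \<in> I" and lim: "A \<longlonglongrightarrow> as" "B \<longlonglongrightarrow> bs" "Q \<longlonglongrightarrow> 0" and "as - bs \<in> int_lattice"
    and R: "\<And>n. norm (P n) < R" "\<And>n. norm (P n + Q n) < R" and "e > 0"
  shows "\<forall>\<^sub>F n in sequentially. - e \<le> F (A n) (P n + Q n) \<eta> - F (B n) (P n) \<eta>"
proof -
  have "R > 0" using R(1)[of 0] norm_ge_zero[of "P 0"] by linarith
  then obtain \<omega> where \<omega>: "modulus \<omega>" and F_\<omega>: "\<And>x y p q. norm p < R \<Longrightarrow> norm q < R \<Longrightarrow>
      \<bar>F x p \<eta> - F y q \<eta>\<bar> \<le> \<omega> (dist x y + dist p q)"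
    using F_modulus \<eta> by blast
  define s where "s n = dist (A n) (B n + (as - bs)) + norm (Q n)" for n
  have "s \<longlonglongrightarrow> dist as (bs + (as - bs)) + norm (0 :: real^'n)"
    unfolding s_def by (intro tendsto_intros lim)
  then have "s \<longlonglongrightarrow> 0" by simp
  then have "(\<lambda>n. \<omega> (s n)) \<longlonglongrightarrow> 0" by (rule modulus_tendsto_0[OF \<omega>, rotated]) (simp add: s_def)
  then have "\<forall>\<^sub>F n in sequentially. \<omega> (s n) < e" using \<open>e > 0\<close> by (simp add: order_tendstoD(2))
  then show ?thesis
  proof eventually_elim
    case (elim n)
    have "F (B n) (P n) \<eta> = F (B n + (as - bs)) (P n) \<eta>"
      using periodic_fn_add_int_lattice[OF F_per \<open>as - bs \<in> int_lattice\<close>] by metis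
    moreover have "dist (P n + Q n) (P n) = norm (Q n)" by (simp add: dist_norm)
    then have "\<bar>F (A n) (P n + Q n) \<eta> - F (B n + (as - bs)) (P n) \<eta>\<bar> \<le> \<omega> (s n)"
      using F_\<omega>[OF R(2)[of n] R(1)[of n], of "A n" "B n + (as - bs)"] by (simp add: s_def)
    ultimately show ?case using elim by linarith
  qed
qed

lemma doubling_max_gradients_bounded:
  assumes \<eta>: "\<eta> \<in> I" and max: "\<And>n x y. doubling \<eta> (Suc n) x0 x y \<le> doubling \<eta> (Suc n) x0 (a n) (b n)"
  defines "p \<equiv> \<lambda>n. Suc n *\<^sub>R torus_penalty_grad (a n - b n)"
    and "q \<equiv> \<lambda>n. torus_penalty_grad (a n - x0)"
  obtains R where "\<And>n. norm (p n) < R" "\<And>n. norm (p n + q n) < R"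
proof -
  define L where "L = (w x0 \<eta> - Mv) / \<theta>"
  define R1 where "R1 = max 1 ((Bf + \<bar>L - Mu\<bar> * k1 + C2) / C1)"
  have "L \<le> u (a n) \<eta>" for n
  proof -
    have "0 \<le> Suc n * torus_penalty (a n - b n)"
      using torus_penalty_nonneg by (intro mult_nonneg_nonneg) auto
    then have "w x0 \<eta> \<le> \<theta> * u (a n) \<eta> - v (b n) \<eta>"
      using doubling_max_lower_bound[OF max, of n] torus_penalty_nonneg[of "a n - x0"] by linarith
    then have "w x0 \<eta> - Mv \<le> \<theta> * u (a n) \<eta>" using v_bdd[OF \<eta>, of "b n"] by linarith
    then show ?thesis using theta(1) by (simp add: L_def pos_divide_le_eq mult.commute)
  qed
  then have "norm ((1 / \<theta>) *\<^sub>R (p n + q n)) \<le> R1" for n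
    unfolding R1_def p_def q_def
    by (intro subsolution_gradient_bound[OF \<eta> subsolution_at_doubling_max[OF \<eta> max]])
  moreover have "norm (p n + q n) = \<theta> * norm ((1 / \<theta>) *\<^sub>R (p n + q n))" for n
    using theta(1) by simp
  moreover have "\<theta> * norm ((1 / \<theta>) *\<^sub>R (p n + q n)) \<le> 1 * norm ((1 / \<theta>) *\<^sub>R (p n + q n))" for n
    using theta by (intro mult_right_mono) auto
  ultimately have pq: "norm (p n + q n) \<le> R1" for n
    by (metis mult_1 order_trans)
  have p: "norm (p n) \<le> R1 + 2 * pi * CARD('n)" for n
    using norm_triangle_ineq4[of "p n + q n" "q n"] pq[of n] norm_torus_penalty_grad_le[of "a n - x0"]
    by (simp add: q_def)
  have "0 \<le> 2 * pi * CARD('n)" by simp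
  show ?thesis
  proof (rule that)
    show "norm (p n) < R1 + 2 * pi * CARD('n) + 1" for n using p[of n] by linarith
    show "norm (p n + q n) < R1 + 2 * pi * CARD('n) + 1" for n
      using pq[of n] \<open>0 \<le> 2 * pi * CARD('n)\<close> by linarith
  qed
qed

lemma doubling_maximizer_sequence:
  assumes "\<eta> \<in> I"
  obtains a b where "\<And>n. (a n, b n) \<in> cbox 0 1 \<times> cbox 0 1"
    "\<And>n x y. doubling \<eta> (Suc n) x0 x y \<le> doubling \<eta> (Suc n) x0 (a n) (b n)"
proof -
  have "\<exists>c. c \<in> cbox 0 1 \<times> cbox 0 1 \<and>
      (\<forall>x y. doubling \<eta> (Suc n) x0 x y \<le> doubling \<eta> (Suc n) x0 (fst c) (snd c))" for n
    using doubling_attains_max[OF assms, of "Suc n" x0] by auto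
  then obtain c where "\<And>n. c n \<in> cbox 0 1 \<times> cbox 0 1"
    "\<And>n x y. doubling \<eta> (Suc n) x0 x y \<le> doubling \<eta> (Suc n) x0 (fst (c n)) (snd (c n))"
    by metis
  then show ?thesis using that[of "\<lambda>n. fst (c n)" "\<lambda>n. snd (c n)"] by simp
qed

lemma nonlocal_term_w_le_if_doubling_limit:
  assumes \<eta>: "\<eta> \<in> I" and lim_a: "A \<longlonglongrightarrow> as" and lim_b: "B \<longlonglongrightarrow> bs"
    and as: "as - x0 \<in> int_lattice" and bs: "bs - x0 \<in> int_lattice"
    and R: "\<And>n. norm (P n) < R" "\<And>n. norm (P n + Q n) < R"
    and Q: "\<And>n. Q n = torus_penalty_grad (A n - x0)"
    and ineq: "\<And>n. F (A n) (P n + Q n) \<eta> - F (B n) (P n) \<eta> + w x0 \<eta> * kernel_mass \<eta>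
      - (LINT \<zeta>:I|lborel. k \<eta> \<zeta> * (\<theta> * u (A n) \<zeta> - v (B n) \<zeta>)) \<le> \<theta> * f (A n) \<eta> - f (B n) \<eta>"
  shows "nonlocal_term I k w x0 \<eta> \<le> - (1 - \<theta>) * f x0 \<eta>"
proof -
  have approx: "nonlocal_term I k w x0 \<eta> + (1 - \<theta>) * f x0 \<eta> \<le> 3 * e" if "e > 0" for e
  proof -
    have "Q \<longlonglongrightarrow> torus_penalty_grad (as - x0)"
      unfolding Q by (intro continuous_on_tendsto_compose[OF continuous_on_torus_penalty_grad]
          tendsto_intros lim_a) auto
    then have "\<forall>\<^sub>F n in sequentially. - e \<le> F (A n) (P n + Q n) \<eta> - F (B n) (P n) \<eta>"
      using torus_penalty_grad_int_lattice[OF as] int_lattice_diff[OF as bs] R \<open>e > 0\<close>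
      by (intro F_shifted_difference_eventually_ge[OF \<eta> lim_a lim_b]) (auto simp: algebra_simps)
    moreover have "f as \<eta> = f x0 \<eta>" "f bs \<eta> = f x0 \<eta>"
      using periodic_fn_eq_mod_int_lattice[OF f_per as] periodic_fn_eq_mod_int_lattice[OF f_per bs] by auto
    then have "(\<lambda>n. f (A n) \<eta>) \<longlonglongrightarrow> f x0 \<eta>" "(\<lambda>n. f (B n) \<eta>) \<longlonglongrightarrow> f x0 \<eta>"
      using continuous_on_tendsto_compose[OF f_cont[OF \<eta>] lim_a]
        continuous_on_tendsto_compose[OF f_cont[OF \<eta>] lim_b] by simp_all
    then have "(\<lambda>n. \<theta> * f (A n) \<eta> - f (B n) \<eta>) \<longlonglongrightarrow> \<theta> * f x0 \<eta> - f x0 \<eta>"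
      by (intro tendsto_diff tendsto_mult_left)
    then have "\<forall>\<^sub>F n in sequentially. \<theta> * f (A n) \<eta> - f (B n) \<eta> < \<theta> * f x0 \<eta> - f x0 \<eta> + e"
      using \<open>e > 0\<close> by (intro order_tendstoD(2)) auto
    moreover have "\<theta> * u as \<zeta> - v bs \<zeta> = w x0 \<zeta>" for \<zeta>
      using periodic_fn_eq_mod_int_lattice[OF periodic_u as] periodic_fn_eq_mod_int_lattice[OF periodic_v bs]
      by (simp add: w_def)
    then have "\<forall>\<^sub>F n in sequentially. (LINT \<zeta>:I|lborel. k \<eta> \<zeta> * (\<theta> * u (A n) \<zeta> - v (B n) \<zeta>))
        \<le> (LINT \<zeta>:I|lborel. k \<eta> \<zeta> * w x0 \<zeta>) + e"
      using weighted_doubled_w_limsup[OF kernel_measurable[OF \<eta>] kernel_nonneg[OF \<eta>] lim_a lim_b \<open>e > 0\<close>]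
      by simp
    ultimately have "\<forall>\<^sub>F n in sequentially. nonlocal_term I k w x0 \<eta> + (1 - \<theta>) * f x0 \<eta> \<le> 3 * e"
    proof eventually_elim
      case (elim n)
      then show ?case using ineq[of n] nonlocal_term_eq[OF \<eta>, where g=w and x=x0, OF set_integrable_w]
        by (simp add: algebra_simps)
    qed
    then show ?thesis by simp
  qed
  have "nonlocal_term I k w x0 \<eta> + (1 - \<theta>) * f x0 \<eta> \<le> 0 + e" if "e > 0" for e
    using approx[of "e / 3"] that by simp
  then have "nonlocal_term I k w x0 \<eta> + (1 - \<theta>) * f x0 \<eta> \<le> 0" by (rule field_le_epsilon)
  then show ?thesis by (simp add: algebra_simps)
qed

lemma nonlocal_term_w_at_max:
  assumes \<eta>: "\<eta> \<in> I" and max_w: "\<And>x. w x \<eta> \<le> w x0 \<eta>"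
  shows "nonlocal_term I k w x0 \<eta> \<le> - (1 - \<theta>) * f x0 \<eta>"
proof -
  obtain a b where ab: "\<And>n. (a n, b n) \<in> cbox 0 1 \<times> cbox 0 1"
    and max: "\<And>n x y. doubling \<eta> (Suc n) x0 x y \<le> doubling \<eta> (Suc n) x0 (a n) (b n)"
    using doubling_maximizer_sequence[OF \<eta>] by blast
  obtain r as bs where lim_a: "(\<lambda>n. a (r n)) \<longlonglongrightarrow> as" and lim_b: "(\<lambda>n. b (r n)) \<longlonglongrightarrow> bs"
    and as: "as - x0 \<in> int_lattice" and bs: "bs - x0 \<in> int_lattice"
    using doubling_maximizers_converge[OF \<eta> max_w ab max] by blast
  define p where "p n = Suc n *\<^sub>R torus_penalty_grad (a n - b n)" for n
  define q where "q n = torus_penalty_grad (a n - x0)" for n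
  obtain R where R: "\<And>n. norm (p n) < R" "\<And>n. norm (p n + q n) < R"
    using doubling_max_gradients_bounded[OF \<eta> max] unfolding p_def q_def by metis
  show ?thesis
  proof (rule nonlocal_term_w_le_if_doubling_limit[OF \<eta> lim_a lim_b as bs])
    show "norm (p (r n)) < R" "norm (p (r n) + q (r n)) < R" for n using R by blast+
    show "q (r n) = torus_penalty_grad (a (r n) - x0)" for n by (simp add: q_def)
    show "F (a (r n)) (p (r n) + q (r n)) \<eta> - F (b (r n)) (p (r n)) \<eta> + w x0 \<eta> * kernel_mass \<eta>
        - (LINT \<zeta>:I|lborel. k \<eta> \<zeta> * (\<theta> * u (a (r n)) \<zeta> - v (b (r n)) \<zeta>))
        \<le> \<theta> * f (a (r n)) \<eta> - f (b (r n)) \<eta>" for n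
      unfolding p_def q_def by (rule doubling_max_inequality[OF \<eta> _ max]) simp
  qed
qed

subsection \<open>The supremum of w\<close>

lemma w_attains_max:
  assumes "\<xi> \<in> I" shows "\<exists>x\<in>cbox 0 1. \<forall>y. w y \<xi> \<le> w x \<xi>"
proof (rule usc_attains_max_fundamental_domain[OF usc_w[OF assms] compact_cbox])
  show "cbox 0 1 \<noteq> ({} :: (real^'n) set)" using int_lattice_representative_in_unit_cube by blast
  show "\<exists>x\<in>cbox 0 1. w y \<xi> = w x \<xi>" for y
    using int_lattice_representative_in_unit_cube[of y] periodic_fn_eq_mod_int_lattice[OF periodic_w]
    by metis
qed

lemma ex_in_I_if_AE:
  assumes "AE \<zeta> in lborel. \<zeta> \<in> I \<longrightarrow> P \<zeta>" shows "\<exists>\<zeta>\<in>I. P \<zeta>"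
proof (rule ccontr)
  assume "\<not> (\<exists>\<zeta>\<in>I. P \<zeta>)"
  with assms have "AE \<zeta> in lborel. \<zeta> \<notin> I" by auto
  then have "emeasure lborel I = 0" by (subst (asm) AE_iff_measurable[OF sets_I]) auto
  then show False using emeasure_I by simp
qed

lemma integral_gap_at_near_max:
  assumes \<xi>: "\<xi> \<in> I" and max: "\<And>y. w y \<xi> \<le> w x \<xi>" and M: "\<And>y \<zeta>. \<zeta> \<in> I \<Longrightarrow> w y \<zeta> \<le> M"
    and near: "M - \<delta> \<le> w x \<xi>"
  shows "k0 * (LINT \<zeta>:I|lborel. M - w x \<zeta>) \<le> k1 * \<delta>"
proof -
  have int: "set_integrable lborel I (\<lambda>\<zeta>. M - w x \<zeta>)"
    by (intro set_integral_diff(1) set_integrable_const set_integrable_w)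
  have "0 \<le> (1 - \<theta>) * f x \<xi>" using f_nonneg[OF \<xi>, of x] theta(2) by simp
  then have "nonlocal_term I k w x \<xi> \<le> 0" using nonlocal_term_w_at_max[OF \<xi> max] by linarith
  then have "(LINT \<zeta>:I|lborel. k \<xi> \<zeta> * (M - w x \<zeta>)) \<le> (M - w x \<xi>) * kernel_mass \<xi>"
    using set_integrable_kernel_mult[OF \<xi> set_integrable_w] set_integrable_kernel_mult[OF \<xi> set_integrable_const]
    by (simp add: nonlocal_term_eq[OF \<xi> set_integrable_w] kernel_mass_def algebra_simps)
  moreover have "(M - w x \<xi>) * kernel_mass \<xi> \<le> \<delta> * k1"
    using kernel_mass_bounds[OF \<xi>] M[OF \<xi>, of x] near by (intro mult_mono) auto
  moreover have "(LINT \<zeta>:I|lborel. k0 * (M - w x \<zeta>)) \<le> (LINT \<zeta>:I|lborel. k \<xi> \<zeta> * (M - w x \<zeta>))"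
    using k_bds(2)[OF \<xi>] M
    by (intro set_integral_mono set_integrable_kernel_mult[OF \<xi> int] set_integrable_mult_right int mult_right_mono) auto
  ultimately show ?thesis by (simp add: mult.commute)
qed

lemma near_max_sequence:
  obtains M X where "\<And>x \<xi>. \<xi> \<in> I \<Longrightarrow> w x \<xi> \<le> M" "\<And>n. X n \<in> cbox 0 1"
    "\<And>n. k0 * (LINT \<zeta>:I|lborel. M - w (X n) \<zeta>) \<le> k1 / Suc n"
proof -
  obtain xm where xm: "\<And>\<xi>. \<xi> \<in> I \<Longrightarrow> xm \<xi> \<in> cbox 0 1 \<and> (\<forall>y. w y \<xi> \<le> w (xm \<xi>) \<xi>)"
    using w_attains_max by metis
  define M where "M = (SUP \<xi>\<in>I. w (xm \<xi>) \<xi>)"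
  have bdd: "bdd_above ((\<lambda>\<xi>. w (xm \<xi>) \<xi>) ` I)" using w_le_bound by (intro bdd_aboveI2) auto
  have wM: "w x \<xi> \<le> M" if "\<xi> \<in> I" for x \<xi>
    using xm[OF that] cSUP_upper[OF that bdd] unfolding M_def by (meson order_trans)
  have "I \<noteq> {}" using emeasure_I by auto
  have "\<exists>\<xi>\<in>I. M - 1 / Suc n < w (xm \<xi>) \<xi>" for n
    using less_cSUP_iff[OF \<open>I \<noteq> {}\<close> bdd, of "M - 1 / Suc n"] by (simp add: M_def)
  then obtain \<xi>s where \<xi>s: "\<And>n. \<xi>s n \<in> I" "\<And>n. M - 1 / Suc n < w (xm (\<xi>s n)) (\<xi>s n)"
    by metis
  have "k0 * (LINT \<zeta>:I|lborel. M - w (xm (\<xi>s n)) \<zeta>) \<le> k1 * (1 / Suc n)" for n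
    using \<xi>s xm[OF \<xi>s(1)] wM by (intro integral_gap_at_near_max) (auto simp: less_imp_le)
  then show ?thesis using that[of M "\<lambda>n. xm (\<xi>s n)"] wM xm[OF \<xi>s(1)] by force
qed

lemma w_sup_attained_ae:
  obtains M xs where "\<And>x \<xi>. \<xi> \<in> I \<Longrightarrow> w x \<xi> \<le> M" "AE \<zeta> in lborel. \<zeta> \<in> I \<longrightarrow> w xs \<zeta> = M"
proof -
  obtain M X where wM: "\<And>x \<xi>. \<xi> \<in> I \<Longrightarrow> w x \<xi> \<le> M" and X: "\<And>n. X n \<in> cbox 0 1"
    and gap: "\<And>n. k0 * (LINT \<zeta>:I|lborel. M - w (X n) \<zeta>) \<le> k1 / Suc n"
    using near_max_sequence by blast
  obtain xs r where r: "strict_mono r" and lim: "(X \<circ> r) \<longlonglongrightarrow> xs"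
    using seq_compactE[OF compact_imp_seq_compact[OF compact_cbox]] X by metis
  have gap_eq: "(LINT \<zeta>:I|lborel. M - w x \<zeta>) = M - (LINT \<zeta>:I|lborel. w x \<zeta>)" for x
    using set_integrable_const set_integrable_w by (simp add: set_integral_const_I)
  have approx: "(LINT \<zeta>:I|lborel. M - w xs \<zeta>) \<le> 2 * e" if "e > 0" for e
  proof -
    have lim': "(\<lambda>n. X (r n)) \<longlonglongrightarrow> xs" using lim by (simp add: comp_def)
    have "(\<lambda>_. 1::real) \<in> borel_measurable (restrict_space borel I)" by simp
    from weighted_doubled_w_limsup[OF this _ lim' lim' \<open>e > 0\<close>, where K=1]
    have "\<forall>\<^sub>F n in sequentially. (LINT \<zeta>:I|lborel. w (X (r n)) \<zeta>) \<le> (LINT \<zeta>:I|lborel. w xs \<zeta>) + e"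
      by (simp add: w_def)
    moreover have "(\<lambda>n. k1 / k0 / Suc n) \<longlonglongrightarrow> 0" by (rule LIMSEQ_Suc[OF lim_const_over_n])
    then have "\<forall>\<^sub>F n in sequentially. k1 / k0 / Suc n < e" using \<open>e > 0\<close> by (intro order_tendstoD(2))
    ultimately have "\<forall>\<^sub>F n in sequentially. (LINT \<zeta>:I|lborel. M - w xs \<zeta>) \<le> 2 * e"
    proof eventually_elim
      case (elim n)
      have "k1 / k0 / Suc (r n) \<le> k1 / k0 / Suc n"
        using seq_suble[OF r, of n] k_bds(1) k1_nonneg by (intro divide_left_mono) auto
      moreover have "(LINT \<zeta>:I|lborel. M - w (X (r n)) \<zeta>) \<le> k1 / k0 / Suc (r n)"
        using gap[of "r n"] k_bds(1) by (simp add: pos_le_divide_eq ac_simps)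
      ultimately show ?case using elim unfolding gap_eq by linarith
    qed
    then show ?thesis by simp
  qed
  have "(LINT \<zeta>:I|lborel. M - w xs \<zeta>) \<le> 0 + e" if "e > 0" for e
    using approx[of "e / 2"] that by simp
  then have "(LINT \<zeta>:I|lborel. M - w xs \<zeta>) \<le> 0" by (rule field_le_epsilon)
  with wM have "AE \<zeta> in lborel. \<zeta> \<in> I \<longrightarrow> M - w xs \<zeta> = 0"
    by (intro AE_zero_if_set_integral_nonpos set_integral_diff(1) set_integrable_const set_integrable_w) auto
  then have "AE \<zeta> in lborel. \<zeta> \<in> I \<longrightarrow> w xs \<zeta> = M" by eventually_elim simp
  then show ?thesis using that[OF wM] by blast
qed

lemma f_vanishes_ae_at_sup:
  assumes wM: "\<And>x \<xi>. \<xi> \<in> I \<Longrightarrow> w x \<xi> \<le> M" and ae: "AE \<zeta> in lborel. \<zeta> \<in> I \<longrightarrow> w xs \<zeta> = M"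
  shows "AE \<zeta> in lborel. \<zeta> \<in> I \<longrightarrow> f xs \<zeta> = 0"
  using ae
proof eventually_elim
  case (elim \<zeta>)
  show ?case
  proof
    assume \<zeta>: "\<zeta> \<in> I"
    then have "w xs \<zeta> = M" using elim by simp
    have int: "set_integrable lborel I (\<lambda>\<zeta>'. k \<zeta> \<zeta>' * (w xs \<zeta> - w xs \<zeta>'))"
      by (intro set_integrable_kernel_mult[OF \<zeta>] set_integral_diff(1) set_integrable_const set_integrable_w)
    have "nonlocal_term I k w xs \<zeta> = integral\<^sup>L lborel (\<lambda>\<zeta>' :: real. 0)"
      unfolding nonlocal_term_def set_lebesgue_integral_def
    proof (rule Bochner_Integration.integral_cong_AE)
      show "(\<lambda>\<zeta>'. indicator I \<zeta>' *\<^sub>R (k \<zeta> \<zeta>' * (w xs \<zeta> - w xs \<zeta>'))) \<in> borel_measurable lborel"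
        using int by (simp add: set_integrable_def)
      show "AE \<zeta>' in lborel. indicator I \<zeta>' *\<^sub>R (k \<zeta> \<zeta>' * (w xs \<zeta> - w xs \<zeta>')) = 0"
        using ae by eventually_elim (auto simp: \<open>w xs \<zeta> = M\<close> indicator_def)
    qed simp
    then have "0 \<le> - (1 - \<theta>) * f xs \<zeta>"
      using nonlocal_term_w_at_max[OF \<zeta>, of xs] wM[OF \<zeta>] \<open>w xs \<zeta> = M\<close> by simp
    moreover have "- (1 - \<theta>) * f xs \<zeta> \<le> 0"
      using f_nonneg[OF \<zeta>, of xs] theta(2) by (intro mult_nonpos_nonneg) auto
    ultimately show "f xs \<zeta> = 0" using theta(2) by simp
  qed
qed

lemma w_le_if_le_on_Z:
  assumes on_Z: "\<And>x \<xi>. (x, \<xi>) \<in> Zset I f \<Longrightarrow> u x \<xi> \<le> v x \<xi>" and "\<xi> \<in> I"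
  shows "w x \<xi> \<le> (1 - \<theta>) * Mv"
proof -
  obtain M xs where wM: "\<And>x \<xi>. \<xi> \<in> I \<Longrightarrow> w x \<xi> \<le> M" and ae: "AE \<zeta> in lborel. \<zeta> \<in> I \<longrightarrow> w xs \<zeta> = M"
    by (rule w_sup_attained_ae) blast
  have f_ae: "AE \<zeta> in lborel. \<zeta> \<in> I \<longrightarrow> f xs \<zeta> = 0" by (rule f_vanishes_ae_at_sup[OF wM ae])
  then have "xs \<in> A_tilde I f" by (simp add: A_tilde_def)
  have "AE \<zeta> in lborel. \<zeta> \<in> I \<longrightarrow> w xs \<zeta> = M \<and> f xs \<zeta> = 0"
    using ae f_ae by eventually_elim auto
  from ex_in_I_if_AE[OF this] obtain \<zeta> where \<zeta>: "\<zeta> \<in> I" "w xs \<zeta> = M" "f xs \<zeta> = 0"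
    by blast
  with \<open>xs \<in> A_tilde I f\<close> have "u xs \<zeta> \<le> v xs \<zeta>" by (intro on_Z) (simp add: Zset_def)
  then have "\<theta> * u xs \<zeta> \<le> \<theta> * v xs \<zeta>" using theta(1) by simp
  then have "M \<le> \<theta> * v xs \<zeta> - v xs \<zeta>" using \<zeta>(2) by (simp add: w_def)
  also have "\<dots> = (1 - \<theta>) * (- v xs \<zeta>)" by (simp add: algebra_simps)
  also have "\<dots> \<le> (1 - \<theta>) * Mv" using v_bdd[OF \<zeta>(1)] theta(2) by (intro mult_left_mono) auto
  finally show ?thesis using wM[OF \<open>\<xi> \<in> I\<close>, of x] by linarith
qed

end

theorem theorem4p2:
  fixes I :: "real set" and k :: "real \<Rightarrow> real \<Rightarrow> real"
    and F :: "real^'n \<Rightarrow> real^'n \<Rightarrow> real \<Rightarrow> real"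
    and f u v :: "real^'n \<Rightarrow> real \<Rightarrow> real"
    and k0 k1 C1 C2 m :: real
  assumes I_int: "is_interval I" "bounded I" "measure lborel I = 1"
    and k_meas: "(\<lambda>p. k (fst p) (snd p)) \<in> borel_measurable (restrict_space borel (I \<times> I))"
    and k_bds: "0 < k0" "\<And>\<xi> \<eta>. \<xi> \<in> I \<Longrightarrow> \<eta> \<in> I \<Longrightarrow> k0 \<le> k \<xi> \<eta> \<and> k \<xi> \<eta> \<le> k1"
    and F_per: "\<And>p \<xi>. periodic_fn (\<lambda>x. F x p \<xi>)"
    and F_cont: "\<And>\<xi>. \<xi> \<in> I \<Longrightarrow> continuous_on UNIV (\<lambda>(x, p). F x p \<xi>)"
    and F_meas: "\<And>x p. F x p \<in> borel_measurable (restrict_space borel I)"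
    and F_bdd: "\<And>p. \<exists>B. \<forall>x. \<forall>\<xi>\<in>I. \<bar>F x p \<xi>\<bar> \<le> B"
    and f_per: "\<And>\<xi>. periodic_fn (\<lambda>x. f x \<xi>)"
    and f_cont: "\<And>\<xi>. \<xi> \<in> I \<Longrightarrow> continuous_on UNIV (\<lambda>x. f x \<xi>)"
    and f_meas: "\<And>x. f x \<in> borel_measurable (restrict_space borel I)"
    and f_bdd: "\<exists>B. \<forall>x. \<forall>\<xi>\<in>I. \<bar>f x \<xi>\<bar> \<le> B"
    and A1: "C1 > 0" "C2 > 0" "m > 1"
      "\<And>x p \<xi>. \<xi> \<in> I \<Longrightarrow> C1 * norm p powr m - C2 \<le> F x p \<xi>"
    and A2: "\<And>x \<xi>. \<xi> \<in> I \<Longrightarrow> f x \<xi> \<ge> 0" "{x. \<forall>\<xi>\<in>I. f x \<xi> = 0} \<noteq> {}"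
    and A3: "\<And>x \<xi>. \<xi> \<in> I \<Longrightarrow> convex_on UNIV (\<lambda>p. F x p \<xi>)"
    and A4: "\<And>x p \<xi>. \<xi> \<in> I \<Longrightarrow> F x p \<xi> \<ge> 0" "\<And>x \<xi>. \<xi> \<in> I \<Longrightarrow> F x 0 \<xi> = 0"
    and A5: "\<exists>\<omega>. modulus \<omega> \<and> (\<forall>x y. \<forall>\<xi>\<in>I. \<bar>f x \<xi> - f y \<xi>\<bar> \<le> \<omega> (dist x y))"
      "\<And>R. R > 0 \<Longrightarrow> \<exists>\<omega>. modulus \<omega> \<and> (\<forall>x y p q. \<forall>\<xi>\<in>I. norm p < R \<longrightarrow> norm q < R \<longrightarrow>
                 \<bar>F x p \<xi> - F y q \<xi>\<bar> \<le> \<omega> (dist x y + dist p q))"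
    and u_cls: "U_plus I u" and v_cls: "U_minus I v"
    and u_sub: "viscosity_subsolution I F k f u"
    and v_super: "viscosity_supersolution I F k f v"
    and u_bdd: "\<exists>M. \<forall>x. \<forall>\<xi>\<in>I. u x \<xi> \<le> M"
    and v_bdd: "\<exists>M. \<forall>x. \<forall>\<xi>\<in>I. - v x \<xi> \<le> M"
    and on_Z: "\<And>x \<xi>. (x, \<xi>) \<in> Zset I f \<Longrightarrow> u x \<xi> \<le> v x \<xi>"
  shows "\<forall>x. \<forall>\<xi>\<in>I. u x \<xi> \<le> v x \<xi>"
proof -
  obtain Bf where Bf: "\<And>x \<xi>. \<xi> \<in> I \<Longrightarrow> \<bar>f x \<xi>\<bar> \<le> Bf" using f_bdd by blast
  obtain Mu where Mu: "\<And>x \<xi>. \<xi> \<in> I \<Longrightarrow> u x \<xi> \<le> Mu" using u_bdd by blast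
  obtain Mv where Mv: "\<And>x \<xi>. \<xi> \<in> I \<Longrightarrow> - v x \<xi> \<le> Mv" using v_bdd by blast
  have "\<theta> * u x \<xi> - v x \<xi> \<le> (1 - \<theta>) * Mv" if "\<xi> \<in> I" "0 < \<theta>" "\<theta> < 1" for x \<xi> \<theta>
  proof -
    interpret comparison_setup I k F f u v k0 k1 C1 C2 m Bf Mu Mv \<theta>
      using I_int k_meas k_bds F_per f_per f_cont Bf A1 A2(1) A3 A4(2) A5(2) u_cls v_cls u_sub v_super Mu Mv that(2,3)
      by unfold_locales auto
    show ?thesis using w_le_if_le_on_Z[OF on_Z \<open>\<xi> \<in> I\<close>] by (simp add: w_def)
  qed
  then show ?thesis by (blast intro: le_if_theta_scaled_le)
qed

end
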